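(* Let $n\ge1$ and let $\gamma\in PSL(n+1,\mathbb{C})$ have a lift $\widetilde\gamma$ equal to the $(n+1)\times(n+1)$ Jordan block with eigenvalue $1$ (ones on the diagonal and superdiagonal, so $\widetilde\gamma e_1=e_1$ and $\widetilde\gamma e_i=e_i+e_{i-1}$ for $i\ge2$). Let $\ell\subset\mathbb{P}^n_{\mathbb{C}}$ be a hyperplane not containing $[e_1]$. Then: (1) the projective action induced by $\bigwedge^n\widetilde\gamma$ on $\mathbb{P}(\bigwedge^n\mathbb{C}^{n+1})$ has a unique fixed point; (2) $\gamma^m(\ell)\to\langle\langle[e_1],\dots,[e_n]\rangle\rangle$ as $m\to\infty$ (in the Hausdorff topology on closed subsets of $\mathbb{P}^n_{\mathbb{C}}$); (3) $\Lambda_{Kul}(\langle\gamma\rangle)=\langle\langle[e_1],\dots,[e_n]\rangle\rangle$.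
   Context: $e_1,\dots,e_{n+1}$ is the standard basis of $\mathbb{C}^{n+1}$; $\langle\langle P\rangle\rangle$ is the smallest projective subspace containing $P$. For $\Gamma\subset PSL(n+1,\mathbb{C})$: $\Lambda(\Gamma)$ is the closure of the union of cluster points of orbits $\Gamma z$ (limits of $g_mz$, $g_m$ pairwise distinct); $L_2(\Gamma)$ is the closure of the union over compact $K\subset\mathbb{P}^n_{\mathbb{C}}\setminus\Lambda(\Gamma)$ of cluster points of $\Gamma K$ (limits of $g_mk_m$, $g_m$ pairwise distinct, $k_m\in K$); $\Lambda_{Kul}(\Gamma)=\Lambda(\Gamma)\cup L_2(\Gamma)$. *)

theory Defs
  imports "HOL-Analysis.Analysis"
begin

text \<open>Vectors of C^I are functions from an index type to complex numbers vanishing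
  outside the finite index set I. C^(n+1) uses I = {1..n+1}, so that e k is the
  k-th standard basis vector e_k.\<close>

definition cvecs :: "'i set \<Rightarrow> ('i \<Rightarrow> complex) set" where
  "cvecs I = {v. \<forall>i. i \<notin> I \<longrightarrow> v i = 0}"

definition e :: "nat \<Rightarrow> nat \<Rightarrow> complex" where
  "e k = (\<lambda>i. if i = k then 1 else 0)"

definition pt :: "('i \<Rightarrow> complex) \<Rightarrow> ('i \<Rightarrow> complex) set" where
  "pt v = {(\<lambda>i. c * v i) | c. c \<noteq> 0}"

definition PS :: "'i set \<Rightarrow> ('i \<Rightarrow> complex) set set" where
  "PS I = {pt v | v. v \<in> cvecs I \<and> v \<noteq> (\<lambda>i. 0)}"

definition mulv :: "'i set \<Rightarrow> ('i \<Rightarrow> 'i \<Rightarrow> complex) \<Rightarrow> ('i \<Rightarrow> complex) \<Rightarrow> ('i \<Rightarrow> complex)" where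
  "mulv I A v = (\<lambda>i. if i \<in> I then (\<Sum>j\<in>I. A i j * v j) else 0)"

definition pmap :: "'i set \<Rightarrow> ('i \<Rightarrow> 'i \<Rightarrow> complex) \<Rightarrow> ('i \<Rightarrow> complex) set \<Rightarrow> ('i \<Rightarrow> complex) set" where
  "pmap I A p = pt (mulv I A (SOME v. v \<in> p))"

definition cspan :: "('i \<Rightarrow> complex) set \<Rightarrow> ('i \<Rightarrow> complex) set" where
  "cspan S = {v. \<exists>F c. finite F \<and> F \<subseteq> S \<and> v = (\<lambda>i. \<Sum>w\<in>F. c w * w i)}"

definition pspan :: "'i set \<Rightarrow> ('i \<Rightarrow> complex) set set \<Rightarrow> ('i \<Rightarrow> complex) set set" where
  "pspan I P = {pt v | v. v \<in> cvecs I \<and> v \<noteq> (\<lambda>i. 0) \<and> v \<in> cspan (\<Union>P)}"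

definition hyperplane :: "'i set \<Rightarrow> ('i \<Rightarrow> complex) \<Rightarrow> ('i \<Rightarrow> complex) set set" where
  "hyperplane I a = {p \<in> PS I. \<forall>v\<in>p. (\<Sum>i\<in>I. a i * v i) = 0}"

text \<open>Distance of [u],[w]: Frobenius distance of the orthogonal projections onto the lines
  (a metric inducing the standard topology of P(C^I)).\<close>
definition nsq :: "'i set \<Rightarrow> ('i \<Rightarrow> complex) \<Rightarrow> complex" where
  "nsq I u = of_real (\<Sum>i\<in>I. (cmod (u i))\<^sup>2)"

definition proj_entry :: "'i set \<Rightarrow> ('i \<Rightarrow> complex) \<Rightarrow> 'i \<Rightarrow> 'i \<Rightarrow> complex" where
  "proj_entry I u i j = u i * cnj (u j) / nsq I u"

definition pdist :: "'i set \<Rightarrow> ('i \<Rightarrow> complex) set \<Rightarrow> ('i \<Rightarrow> complex) set \<Rightarrow> real" where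
  "pdist I p q = (let u = (SOME v. v \<in> p); w = (SOME v. v \<in> q) in
      sqrt (\<Sum>i\<in>I. \<Sum>j\<in>I. (cmod (proj_entry I u i j - proj_entry I w i j))\<^sup>2))"

definition hdist :: "'i set \<Rightarrow> ('i \<Rightarrow> complex) set set \<Rightarrow> ('i \<Rightarrow> complex) set set \<Rightarrow> real" where
  "hdist I A B = max (SUP a\<in>A. INF b\<in>B. pdist I a b) (SUP b\<in>B. INF a\<in>A. pdist I a b)"

definition mconv :: "('a \<Rightarrow> 'a \<Rightarrow> real) \<Rightarrow> (nat \<Rightarrow> 'a) \<Rightarrow> 'a \<Rightarrow> bool" where
  "mconv d x y \<longleftrightarrow> (\<lambda>m. d (x m) y) \<longlonglongrightarrow> 0"

definition mclos :: "'a set \<Rightarrow> ('a \<Rightarrow> 'a \<Rightarrow> real) \<Rightarrow> 'a set \<Rightarrow> 'a set" where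
  "mclos P d S = {y \<in> P. \<exists>s. (\<forall>m. s m \<in> S) \<and> mconv d s y}"

definition mcompact :: "'a set \<Rightarrow> ('a \<Rightarrow> 'a \<Rightarrow> real) \<Rightarrow> 'a set \<Rightarrow> bool" where
  "mcompact P d K \<longleftrightarrow> K \<subseteq> P \<and>
     (\<forall>s. (\<forall>m. s m \<in> K) \<longrightarrow> (\<exists>(r::nat \<Rightarrow> nat) y. strict_mono r \<and> y \<in> K \<and> mconv d (s \<circ> r) y))"

definition LimLambda :: "'a set \<Rightarrow> ('a \<Rightarrow> 'a \<Rightarrow> real) \<Rightarrow> ('a \<Rightarrow> 'a) set \<Rightarrow> 'a set" where
  "LimLambda P d \<Gamma> = mclos P d
     {y \<in> P. \<exists>z\<in>P. \<exists>g. inj g \<and> (\<forall>m. g m \<in> \<Gamma>) \<and> mconv d (\<lambda>m. g m z) y}"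

definition LimL2 :: "'a set \<Rightarrow> ('a \<Rightarrow> 'a \<Rightarrow> real) \<Rightarrow> ('a \<Rightarrow> 'a) set \<Rightarrow> 'a set" where
  "LimL2 P d \<Gamma> = mclos P d
     {y \<in> P. \<exists>K. mcompact P d K \<and> K \<subseteq> P - LimLambda P d \<Gamma> \<and>
        (\<exists>g k. inj g \<and> (\<forall>m. g m \<in> \<Gamma>) \<and> (\<forall>m. k m \<in> K) \<and> mconv d (\<lambda>m. g m (k m)) y)}"

definition KulLim :: "'a set \<Rightarrow> ('a \<Rightarrow> 'a \<Rightarrow> real) \<Rightarrow> ('a \<Rightarrow> 'a) set \<Rightarrow> 'a set" where
  "KulLim P d \<Gamma> = LimLambda P d \<Gamma> \<union> LimL2 P d \<Gamma>"

definition zpow :: "'a set \<Rightarrow> ('a \<Rightarrow> 'a) \<Rightarrow> int \<Rightarrow> 'a \<Rightarrow> 'a" where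
  "zpow P f k = (if k \<ge> 0 then f ^^ nat k else (inv_into P f) ^^ nat (- k))"

definition cyclic :: "'a set \<Rightarrow> ('a \<Rightarrow> 'a) \<Rightarrow> ('a \<Rightarrow> 'a) set" where
  "cyclic P f = {restrict (zpow P f k) P | k. True}"

definition jordan1 :: "nat \<Rightarrow> nat \<Rightarrow> nat \<Rightarrow> complex" where
  "jordan1 n i j = (if i \<in> {1..n+1} \<and> j \<in> {1..n+1} \<and> (j = i \<or> j = Suc i) then 1 else 0)"

text \<open>Index set of the standard basis e_S of the n-th exterior power of C^(n+1).\<close>
definition nsubsets :: "nat \<Rightarrow> nat set set" where
  "nsubsets n = {S. S \<subseteq> {1..n+1} \<and> card S = n}"

definition ldet :: "nat \<Rightarrow> (nat \<Rightarrow> nat \<Rightarrow> complex) \<Rightarrow> complex" where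
  "ldet k M = (\<Sum>p | p permutes {..<k}. of_int (sign p) * (\<Prod>i<k. M i (p i)))"

text \<open>Matrix of the n-th exterior power of A in the basis e_S (S increasing):
  entries are the n x n minors of A (n-th compound matrix).\<close>
definition compound :: "nat \<Rightarrow> (nat \<Rightarrow> nat \<Rightarrow> complex) \<Rightarrow> nat set \<Rightarrow> nat set \<Rightarrow> complex" where
  "compound n A S T = ldet n (\<lambda>a b. A (sorted_list_of_set S ! a) (sorted_list_of_set T ! b))"

end

theory Submission
  imports Defs
begin

text \<open>The powers of the Jordan block are (J^k)_{i,i+r} = binom(k,r) for every k \<in> \<int>.
  For |k| \<rightarrow> \<infinity> the top binomial coefficient dominates all lower ones, so J^k moves every line
  towards [e_1], uniformly over lines whose last nonzero coordinate carries a fixed share of the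
  norm. Hence orbits accumulate only at [e_1] and \<Lambda> = {[e_1]}.
  Applied to \<gamma>^-m the same estimate shows that the points of \<gamma>^m(\<ell>) have a small last
  coordinate (otherwise their preimages in \<ell> would be close to [e_1], which \<ell> avoids), while
  every [u] with u_{n+1} = 0 is the image under \<gamma>^m of the point J^-m(u + s e_{n+1}) of \<ell>,
  where s \<rightarrow> 0; so \<gamma>^m(\<ell>) tends to H = {x_{n+1} = 0}. The same two arguments, with a compact set
  avoiding [e_1] such as {x_1 = 0}, give L_2 = H.
  In the basis e_{{1..n+1}-{i}} of the n-th exterior power, the compound matrix of J is the
  lower triangular matrix of ones, whose only eigenline is spanned by e_1 \<and> \<dots> \<and> e_n.\<close>

section \<open>Projective points and the metric\<close>

lemma pt_self: "v \<in> pt v"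
  unfolding pt_def by (rule CollectI) (rule exI[of _ 1], simp)

lemma pt_eqD: "pt u = pt w \<Longrightarrow> \<exists>c. c \<noteq> 0 \<and> u = (\<lambda>i. c * w i)"
  using pt_self[of u] unfolding pt_def by auto

lemma pt_scale: "c \<noteq> 0 \<Longrightarrow> pt (\<lambda>i. c * v i) = pt v"
proof -
  assume c: "c \<noteq> 0"
  show ?thesis unfolding pt_def
  proof (intro equalityI subsetI)
    fix x assume "x \<in> {\<lambda>i. d * (c * v i) |d. d \<noteq> 0}"
    then obtain d where "d \<noteq> 0" "x = (\<lambda>i. d * (c * v i))" by auto
    then show "x \<in> {\<lambda>i. d * v i |d. d \<noteq> 0}" using c by (intro CollectI exI[of _ "d*c"]) (auto simp: mult.assoc)
  next
    fix x assume "x \<in> {\<lambda>i. d * v i |d. d \<noteq> 0}"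
    then obtain d where "d \<noteq> 0" "x = (\<lambda>i. d * v i)" by auto
    then show "x \<in> {\<lambda>i. d * (c * v i) |d. d \<noteq> 0}" using c
      by (intro CollectI exI[of _ "d/c"]) (auto simp: mult.assoc)
  qed
qed

lemma some_in_pt: "\<exists>c. c \<noteq> 0 \<and> (SOME x. x \<in> pt v) = (\<lambda>i. c * v i)"
proof -
  have "(SOME x. x \<in> pt v) \<in> pt v" by (rule someI[of _ v], rule pt_self)
  then show ?thesis unfolding pt_def by auto
qed

lemma PS_iff: "p \<in> PS I \<longleftrightarrow> (\<exists>v. v \<in> cvecs I \<and> v \<noteq> (\<lambda>i. 0) \<and> p = pt v)"
  unfolding PS_def by auto

lemma cvecs_out: "v \<in> cvecs I \<Longrightarrow> i \<notin> I \<Longrightarrow> v i = 0"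
  unfolding cvecs_def by auto

lemma e_cvecs: "k \<in> I \<Longrightarrow> e k \<in> cvecs I" unfolding e_def cvecs_def by auto

lemma e_nonzero: "e k \<noteq> (\<lambda>i. 0)" unfolding e_def by (auto dest: fun_cong[of _ _ k])

definition sqnorm :: "'i set \<Rightarrow> ('i \<Rightarrow> complex) \<Rightarrow> real" where
  "sqnorm I u = (\<Sum>i\<in>I. (cmod (u i))\<^sup>2)"

lemma sqnorm_nonneg: "sqnorm I u \<ge> 0" unfolding sqnorm_def by (simp add: sum_nonneg)

lemma sqnorm_scale: "sqnorm I (\<lambda>i. c * u i) = (cmod c)^2 * sqnorm I u"
  unfolding sqnorm_def by (simp add: norm_mult power_mult_distrib sum_distrib_left)

lemma nsq_sqnorm: "nsq I u = of_real (sqnorm I u)" unfolding nsq_def sqnorm_def by simp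

lemma sqnorm_pos: "finite I \<Longrightarrow> u \<in> cvecs I \<Longrightarrow> u \<noteq> (\<lambda>i. 0) \<Longrightarrow> sqnorm I u > 0"
proof -
  assume f: "finite I" and u: "u \<in> cvecs I" "u \<noteq> (\<lambda>i. 0)"
  then obtain j where j: "u j \<noteq> 0" by auto
  then have jI: "j \<in> I" using u unfolding cvecs_def by auto
  have "(cmod (u j))^2 \<le> sqnorm I u" unfolding sqnorm_def
    by (rule member_le_sum[OF jI _ f]) simp
  moreover have "(cmod (u j))^2 > 0" using j by simp
  ultimately show ?thesis by linarith
qed

lemma norm_coord_le_sqnorm:
  fixes n :: nat
  assumes w: "w \<in> cvecs {1..n+1}"
  shows "cmod (w j) \<le> sqrt (sqnorm {1..n+1} w)"
proof (cases "j \<in> {1..n+1}")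
  case True
  have "(cmod (w j))^2 \<le> sqnorm {1..n+1} w" unfolding sqnorm_def by (rule member_le_sum[OF True]) auto
  then show ?thesis using real_le_rsqrt by simp
next
  case False
  then show ?thesis using cvecs_out[OF w False] by (simp add: sqnorm_nonneg)
qed

lemma normalize_vec:
  fixes n :: nat
  assumes v: "v \<in> cvecs {1..n+1}" "v \<noteq> (\<lambda>i. 0)"
  shows "\<exists>u. u \<in> cvecs {1..n+1} \<and> sqnorm {1..n+1} u = 1 \<and> pt u = pt v \<and> (\<exists>c. c \<noteq> 0 \<and> u = (\<lambda>i. c * v i))"
proof -
  have np: "sqnorm {1..n+1} v > 0" using sqnorm_pos[OF _ v] by simp
  define c where "c = complex_of_real (1 / sqrt (sqnorm {1..n+1} v))"
  have c0: "c \<noteq> 0" unfolding c_def using np by simp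
  define u where "u = (\<lambda>i. c * v i)"
  have "u \<in> cvecs {1..n+1}" using v(1) unfolding u_def cvecs_def by auto
  moreover have "sqnorm {1..n+1} u = 1" unfolding u_def sqnorm_scale c_def using np
    by (simp add: power_divide norm_divide)
  moreover have "pt u = pt v" unfolding u_def by (rule pt_scale[OF c0])
  ultimately show ?thesis using c0 unfolding u_def by blast
qed

lemma tendsto_sqnorm:
  fixes U :: "nat \<Rightarrow> 'i \<Rightarrow> complex"
  assumes "\<forall>i\<in>I. (\<lambda>m. U m i) \<longlonglongrightarrow> u i"
  shows "(\<lambda>m. sqnorm I (U m)) \<longlonglongrightarrow> sqnorm I u"
  unfolding sqnorm_def using assms by (intro tendsto_sum tendsto_power tendsto_norm) auto

lemma proj_entry_scale: "c \<noteq> 0 \<Longrightarrow> proj_entry I (\<lambda>i. c * u i) i j = proj_entry I u i j"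
proof -
  assume c: "c \<noteq> 0"
  have cc: "c * cnj c \<noteq> 0" using c by simp
  have "nsq I (\<lambda>i. c*u i) = (c * cnj c) * nsq I u" unfolding nsq_sqnorm sqnorm_scale
    by (simp only: of_real_mult complex_norm_square)
  then show ?thesis unfolding proj_entry_def using cc by (simp add: field_simps)
qed

definition line_dist :: "'i set \<Rightarrow> ('i \<Rightarrow> complex) \<Rightarrow> ('i \<Rightarrow> complex) \<Rightarrow> real" where
  "line_dist I u w = sqrt (\<Sum>i\<in>I. \<Sum>j\<in>I. (cmod (proj_entry I u i j - proj_entry I w i j))\<^sup>2)"

lemma line_dist_scale: "c \<noteq> 0 \<Longrightarrow> d \<noteq> 0 \<Longrightarrow> line_dist I (\<lambda>i. c * u i) (\<lambda>i. d * w i) = line_dist I u w"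
  unfolding line_dist_def by (simp add: proj_entry_scale)

lemma pdist_pt: "pdist I (pt u) (pt w) = line_dist I u w"
proof -
  obtain c where c: "c \<noteq> 0" "(SOME x. x \<in> pt u) = (\<lambda>i. c * u i)" using some_in_pt by blast
  obtain d where d: "d \<noteq> 0" "(SOME x. x \<in> pt w) = (\<lambda>i. d * w i)" using some_in_pt by blast
  show ?thesis unfolding pdist_def Let_def c(2) d(2) line_dist_scale[OF c(1) d(1)] line_dist_def[symmetric] ..
qed

lemma line_dist_sym: "line_dist I u w = line_dist I w u"
  unfolding line_dist_def by (simp add: norm_minus_commute)

lemma line_dist_nonneg: "line_dist I u w \<ge> 0" unfolding line_dist_def by (simp add: sum_nonneg)

lemma line_dist_self: "line_dist I u u = 0" unfolding line_dist_def by simp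

definition coord_frac :: "'i set \<Rightarrow> 'i \<Rightarrow> ('i \<Rightarrow> complex) \<Rightarrow> real" where
  "coord_frac I i u = (cmod (u i))^2 / sqnorm I u"

lemma proj_entry_diag: "proj_entry I u i i = of_real (coord_frac I i u)"
  unfolding proj_entry_def coord_frac_def nsq_sqnorm by (simp add: complex_norm_square[symmetric])

lemma coord_frac_lipschitz: "finite I \<Longrightarrow> i \<in> I \<Longrightarrow> \<bar>coord_frac I i u - coord_frac I i w\<bar> \<le> line_dist I u w"
proof -
  assume f: "finite I" and i: "i \<in> I"
  let ?f = "\<lambda>i j. (cmod (proj_entry I u i j - proj_entry I w i j))\<^sup>2"
  have "?f i i \<le> (\<Sum>j\<in>I. ?f i j)" by (rule member_le_sum[OF i _ f]) simp
  also have "\<dots> \<le> (\<Sum>i\<in>I. \<Sum>j\<in>I. ?f i j)" by (rule member_le_sum[OF i _ f]) (simp add: sum_nonneg)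
  finally have "cmod (proj_entry I u i i - proj_entry I w i i) \<le> line_dist I u w" unfolding line_dist_def
    by (intro real_le_rsqrt)
  then show ?thesis unfolding proj_entry_diag by (simp flip: of_real_diff)
qed

lemma coord_frac_scale: "c \<noteq> 0 \<Longrightarrow> coord_frac I i (\<lambda>i. c * u i) = coord_frac I i u"
  unfolding coord_frac_def sqnorm_scale by (simp add: norm_mult power_mult_distrib)

lemma coord_frac_le_1: "finite I \<Longrightarrow> i \<in> I \<Longrightarrow> coord_frac I i u \<le> 1"
proof -
  assume f: "finite I" and i: "i \<in> I"
  have "(cmod (u i))^2 \<le> sqnorm I u" unfolding sqnorm_def by (rule member_le_sum[OF i _ f]) simp
  then show ?thesis unfolding coord_frac_def using sqnorm_nonneg[of I u] by (cases "sqnorm I u = 0") (auto simp: divide_le_eq_1)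
qed

lemma coord_frac_nonneg: "coord_frac I i u \<ge> 0" unfolding coord_frac_def by (simp add: sqnorm_nonneg)

lemma coord_frac_eq_0_iff:
  fixes n :: nat
  assumes v: "v \<in> cvecs {1..n+1}" "v \<noteq> (\<lambda>i. 0)"
  shows "coord_frac {1..n+1} i v = 0 \<longleftrightarrow> v i = 0"
  using sqnorm_pos[OF _ v] unfolding coord_frac_def by simp

lemma coord_frac_1_eq_1_imp:
  fixes n :: nat
  assumes v: "v \<in> cvecs {1..n+1}" "v \<noteq> (\<lambda>i. 0)" and q: "coord_frac {1..n+1} 1 v = 1"
  shows "pt v = pt (e 1)"
proof -
  have pos: "sqnorm {1..n+1} v > 0" by (rule sqnorm_pos[OF _ v]) simp
  have eq: "(cmod (v 1))^2 = sqnorm {1..n+1} v" using q pos unfolding coord_frac_def by simp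
  have "sqnorm {1..n+1} v = (cmod (v 1))^2 + (\<Sum>i\<in>{1..n+1} - {1}. (cmod (v i))^2)"
    unfolding sqnorm_def by (subst sum.remove[of _ 1]) auto
  then have "(\<Sum>i\<in>{1..n+1} - {1}. (cmod (v i))^2) = 0" using eq by simp
  then have z: "\<forall>i\<in>{1..n+1} - {1}. (cmod (v i))^2 = 0" by (subst (asm) sum_nonneg_eq_0_iff) auto
  have lift_vec: "v = (\<lambda>i. v 1 * e 1 i)"
  proof
    fix i show "v i = v 1 * e 1 i"
      using z cvecs_out[OF v(1), of i] unfolding e_def by (cases "i \<in> {1..n+1}") auto
  qed
  have "v 1 \<noteq> 0" using lift_vec v(2) by auto
  then show ?thesis using pt_scale[of "v 1" "e 1"] lift_vec by simp
qed

definition vnorm :: "'i set \<Rightarrow> ('i \<Rightarrow> complex) \<Rightarrow> real" where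
  "vnorm I u = sqrt (sqnorm I u)"

lemma vnorm_L2_set: "vnorm I u = L2_set (\<lambda>i. cmod (u i)) I"
  unfolding vnorm_def sqnorm_def L2_set_def ..

lemma vnorm_triangle: "vnorm I (\<lambda>i. f i + g i) \<le> vnorm I f + vnorm I g"
proof -
  have "vnorm I (\<lambda>i. f i + g i) \<le> L2_set (\<lambda>i. cmod (f i) + cmod (g i)) I"
    unfolding vnorm_L2_set by (rule L2_set_mono) (auto intro: norm_triangle_ineq)
  also have "\<dots> \<le> vnorm I f + vnorm I g" unfolding vnorm_L2_set
    by (rule L2_set_triangle_ineq)
  finally show ?thesis .
qed

lemma vnorm_scale: "vnorm I (\<lambda>i. c * u i) = cmod c * vnorm I u"
  unfolding vnorm_def sqnorm_scale by (simp add: real_sqrt_mult)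

lemma vnorm_minus_commute: "vnorm I (\<lambda>i. u i - w i) = vnorm I (\<lambda>i. w i - u i)"
  unfolding vnorm_def sqnorm_def by (simp add: norm_minus_commute)

lemma vnorm_reverse_triangle: "\<bar>vnorm I u - vnorm I w\<bar> \<le> vnorm I (\<lambda>i. u i - w i)"
proof -
  have 1: "vnorm I u \<le> vnorm I w + vnorm I (\<lambda>i. u i - w i)"
    using vnorm_triangle[of I w "\<lambda>i. u i - w i"] by simp
  have 2: "vnorm I w \<le> vnorm I u + vnorm I (\<lambda>i. u i - w i)"
    using vnorm_triangle[of I u "\<lambda>i. w i - u i"] vnorm_minus_commute[of I u w] by simp
  show ?thesis using 1 2 by linarith
qed

lemma vnorm_e: "k \<in> {1..n+1} \<Longrightarrow> vnorm {1..n+1} (e k) = 1"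
proof -
  assume k: "k \<in> {1..n+1}"
  have "sqnorm {1..n+1} (e k) = (\<Sum>i\<in>{1..n+1}. if i = k then 1 else 0)" unfolding sqnorm_def e_def
    by (rule sum.cong) auto
  then show ?thesis using k unfolding vnorm_def by simp
qed

lemma square_sum_le: "((a::real) + b)^2 \<le> 2 * (a^2 + b^2)"
  using sum_squares_ge_zero[of "a - b" 0] by (simp add: power2_eq_square algebra_simps)

lemma double_sum_product: "(\<Sum>i\<in>I. \<Sum>j\<in>I. 2 * ((a::'i\<Rightarrow>real) i * b j + c i * d j)) = 2 * ((sum a I)*(sum b I) + (sum c I)*(sum d I))"
proof -
  have p: "(\<Sum>i\<in>I. \<Sum>j\<in>I. f i * g j) = sum f I * sum g I" for f g :: "'i \<Rightarrow> real"
    by (simp add: sum_product)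
  have "(\<Sum>i\<in>I. \<Sum>j\<in>I. 2 * (a i * b j + c i * d j)) = 2 * ((\<Sum>i\<in>I. \<Sum>j\<in>I. a i * b j) + (\<Sum>i\<in>I. \<Sum>j\<in>I. c i * d j))"
    by (simp add: sum.distrib sum_distrib_left distrib_left)
  then show ?thesis by (simp only: p)
qed

lemma line_dist_unit_le:
  assumes x: "sqnorm I x = 1" and y: "sqnorm I y = 1"
  shows "line_dist I x y \<le> 2 * sqrt (sqnorm I (\<lambda>i. x i - y i))"
proof -
  have pex: "proj_entry I x i j = x i * cnj (x j)" for i j using x unfolding proj_entry_def nsq_sqnorm by simp
  have pey: "proj_entry I y i j = y i * cnj (y j)" for i j using y unfolding proj_entry_def nsq_sqnorm by simp
  have t: "(cmod (proj_entry I x i j - proj_entry I y i j))^2 \<le>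
      2 * ((cmod (x i - y i))^2 * (cmod (x j))^2 + (cmod (y i))^2 * (cmod (x j - y j))^2)" for i j
  proof -
    have "x i * cnj (x j) - y i * cnj (y j) = (x i - y i) * cnj (x j) + y i * cnj (x j - y j)"
      by (simp add: algebra_simps)
    then have "cmod (x i * cnj (x j) - y i * cnj (y j)) \<le> cmod (x i - y i) * cmod (x j) + cmod (y i) * cmod (x j - y j)"
      by (metis complex_mod_cnj norm_mult norm_triangle_ineq)
    then have "(cmod (x i * cnj (x j) - y i * cnj (y j)))^2 \<le> (cmod (x i - y i) * cmod (x j) + cmod (y i) * cmod (x j - y j))^2"
      by (rule power_mono) simp
    also have "\<dots> \<le> 2 * ((cmod (x i - y i) * cmod (x j))^2 + (cmod (y i) * cmod (x j - y j))^2)"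
      by (rule square_sum_le)
    finally show ?thesis unfolding pex pey by (simp add: power_mult_distrib)
  qed
  have "(\<Sum>i\<in>I. \<Sum>j\<in>I. (cmod (proj_entry I x i j - proj_entry I y i j))^2) \<le>
     (\<Sum>i\<in>I. \<Sum>j\<in>I. 2 * ((cmod (x i - y i))^2 * (cmod (x j))^2 + (cmod (y i))^2 * (cmod (x j - y j))^2))"
    by (intro sum_mono t)
  also have "\<dots> = 2 * (sqnorm I (\<lambda>i. x i - y i) * sqnorm I x + sqnorm I y * sqnorm I (\<lambda>i. x i - y i))"
    unfolding sqnorm_def by (rule double_sum_product)
  also have "\<dots> = 4 * sqnorm I (\<lambda>i. x i - y i)" using x y by simp
  finally have "line_dist I x y \<le> sqrt (4 * sqnorm I (\<lambda>i. x i - y i))" unfolding line_dist_def by simp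
  then show ?thesis by (simp add: real_sqrt_mult)
qed

lemma line_dist_le:
  assumes u: "sqnorm I u > 0" and w: "sqnorm I w > 0"
  shows "line_dist I u w \<le> 4 * vnorm I (\<lambda>i. u i - w i) / vnorm I u"
proof -
  define A where "A = vnorm I u"
  define B where "B = vnorm I w"
  have A: "A > 0" using u unfolding A_def vnorm_def by simp
  have B: "B > 0" using w unfolding B_def vnorm_def by simp
  define x where "x = (\<lambda>i. complex_of_real (1/A) * u i)"
  define y where "y = (\<lambda>i. complex_of_real (1/B) * w i)"
  have nx: "sqnorm I x = 1" unfolding x_def sqnorm_scale using A u unfolding A_def vnorm_def
    by (simp add: power_divide norm_divide sqnorm_nonneg)
  have ny: "sqnorm I y = 1" unfolding y_def sqnorm_scale using B w unfolding B_def vnorm_def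
    by (simp add: power_divide norm_divide sqnorm_nonneg)
  have "line_dist I u w = line_dist I x y" unfolding x_def y_def
    using line_dist_scale[of "complex_of_real (1/A)" "complex_of_real (1/B)" I u w] A B by simp
  also have "\<dots> \<le> 2 * vnorm I (\<lambda>i. x i - y i)" using line_dist_unit_le[OF nx ny] unfolding vnorm_def .
  also have "vnorm I (\<lambda>i. x i - y i) \<le> 2 * vnorm I (\<lambda>i. u i - w i) / A"
  proof -
    have eq: "(\<lambda>i. x i - y i) = (\<lambda>i. complex_of_real (1/A) * (u i - w i) + complex_of_real (1/A - 1/B) * w i)"
      unfolding x_def y_def by (auto simp: algebra_simps)
    have tri: "vnorm I (\<lambda>i. complex_of_real (1/A) * (u i - w i) + complex_of_real (1/A - 1/B) * w i)
        \<le> \<bar>1/A\<bar> * vnorm I (\<lambda>i. u i - w i) + \<bar>1/A - 1/B\<bar> * vnorm I w"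
      using vnorm_triangle[of I "\<lambda>i. complex_of_real (1/A) * (u i - w i)" "\<lambda>i. complex_of_real (1/A - 1/B) * w i"]
      unfolding vnorm_scale norm_of_real .
    have "vnorm I (\<lambda>i. x i - y i) \<le> (1/A) * vnorm I (\<lambda>i. u i - w i) + \<bar>1/A - 1/B\<bar> * B"
      unfolding eq using tri A unfolding B_def by simp
    also have "\<bar>1/A - 1/B\<bar> * B = \<bar>B - A\<bar> / A" using A B by (simp add: field_simps abs_div abs_mult)
    also have "\<bar>B - A\<bar> \<le> vnorm I (\<lambda>i. u i - w i)" unfolding A_def B_def using vnorm_reverse_triangle[of I u w] by simp
    finally show ?thesis using A by (simp add: divide_right_mono add_divide_distrib)
  qed
  finally show ?thesis unfolding A_def by simp
qed

definition pcoord_frac :: "'i set \<Rightarrow> 'i \<Rightarrow> ('i \<Rightarrow> complex) set \<Rightarrow> real" where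
  "pcoord_frac I i p = coord_frac I i (SOME v. v \<in> p)"

lemma pcoord_frac_pt: "pcoord_frac I i (pt v) = coord_frac I i v"
proof -
  obtain c where c: "c \<noteq> 0" "(SOME x. x \<in> pt v) = (\<lambda>i. c * v i)" using some_in_pt by blast
  show ?thesis unfolding pcoord_frac_def c(2) coord_frac_scale[OF c(1)] ..
qed

lemma pcoord_frac_lipschitz:
  assumes f: "finite I" and i: "i \<in> I" and p: "p \<in> PS I" and q: "q \<in> PS I"
  shows "\<bar>pcoord_frac I i p - pcoord_frac I i q\<bar> \<le> pdist I p q"
proof -
  obtain u where u: "p = pt u" using p unfolding PS_iff by auto
  obtain w where w: "q = pt w" using q unfolding PS_iff by auto
  show ?thesis unfolding u w pcoord_frac_pt pdist_pt by (rule coord_frac_lipschitz[OF f i])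
qed

lemma pdist_self: "p \<in> PS I \<Longrightarrow> pdist I p p = 0"
  unfolding PS_iff using pdist_pt line_dist_self by metis

lemma pdist_nonneg: "p \<in> PS I \<Longrightarrow> q \<in> PS I \<Longrightarrow> pdist I p q \<ge> 0"
  unfolding PS_iff using pdist_pt line_dist_nonneg by metis

lemma mclos_superset: "S \<subseteq> PS I \<Longrightarrow> S \<subseteq> mclos (PS I) (pdist I) S"
  unfolding mclos_def mconv_def
proof (intro subsetI CollectI conjI)
  fix y assume "S \<subseteq> PS I" "y \<in> S"
  then show "y \<in> PS I" "\<exists>s. (\<forall>m. s m \<in> S) \<and> (\<lambda>m. pdist I (s m) y) \<longlonglongrightarrow> 0"
    by (auto intro!: exI[of _ "\<lambda>m. y"] simp: pdist_self)
qed

lemma mclos_level_set: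
  assumes f: "finite I" and i: "i \<in> I" and S: "S \<subseteq> {p \<in> PS I. pcoord_frac I i p = c}"
  shows "mclos (PS I) (pdist I) S \<subseteq> {p \<in> PS I. pcoord_frac I i p = c}"
proof
  fix y assume "y \<in> mclos (PS I) (pdist I) S"
  then obtain s where y: "y \<in> PS I" and s: "\<forall>m. s m \<in> S" and lim: "(\<lambda>m. pdist I (s m) y) \<longlonglongrightarrow> 0"
    unfolding mclos_def mconv_def by auto
  have "\<bar>c - pcoord_frac I i y\<bar> \<le> pdist I (s m) y" for m
  proof -
    have sm: "s m \<in> PS I" "pcoord_frac I i (s m) = c" using s S by auto
    show ?thesis using pcoord_frac_lipschitz[OF f i sm(1) y] sm(2) by simp
  qed
  then have "\<bar>c - pcoord_frac I i y\<bar> \<le> 0" using lim by (intro LIMSEQ_le_const) auto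
  then show "y \<in> {p \<in> PS I. pcoord_frac I i p = c}" using y by simp
qed

lemma hdist_le:
  assumes A: "A \<noteq> {}" "A \<subseteq> PS I" and B: "B \<noteq> {}" "B \<subseteq> PS I"
    and AB: "\<forall>x\<in>A. \<exists>y\<in>B. pdist I x y \<le> \<delta>" and BA: "\<forall>y\<in>B. \<exists>x\<in>A. pdist I x y \<le> \<delta>"
  shows "0 \<le> hdist I A B \<and> hdist I A B \<le> \<delta>"
proof -
  define f where "f x = (INF b\<in>B. pdist I x b)" for x
  define g where "g y = (INF a\<in>A. pdist I a y)" for y
  have f0: "0 \<le> f x" if "x \<in> A" for x unfolding f_def
    using that A B by (intro cINF_greatest) (auto intro!: pdist_nonneg)
  have fd: "f x \<le> \<delta>" if x: "x \<in> A" for x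
  proof -
    obtain y where y: "y \<in> B" "pdist I x y \<le> \<delta>" using AB x by blast
    have "bdd_below ((\<lambda>b. pdist I x b) ` B)" using x A B by (intro bdd_belowI[of _ 0]) (auto intro!: pdist_nonneg)
    then show ?thesis unfolding f_def using y by (intro cINF_lower2) auto
  qed
  have g0: "0 \<le> g y" if "y \<in> B" for y unfolding g_def
    using that A B by (intro cINF_greatest) (auto intro!: pdist_nonneg)
  have gd: "g y \<le> \<delta>" if y: "y \<in> B" for y
  proof -
    obtain x where x: "x \<in> A" "pdist I x y \<le> \<delta>" using BA y by blast
    have "bdd_below ((\<lambda>a. pdist I a y) ` A)" using y A B by (intro bdd_belowI[of _ 0]) (auto intro!: pdist_nonneg)
    then show ?thesis unfolding g_def using x by (intro cINF_lower2) auto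
  qed
  obtain x0 where x0: "x0 \<in> A" using A by blast
  obtain y0 where y0: "y0 \<in> B" using B by blast
  have S1: "0 \<le> (SUP x\<in>A. f x) \<and> (SUP x\<in>A. f x) \<le> \<delta>"
  proof
    have "bdd_above (f ` A)" using fd by (intro bdd_aboveI[of _ \<delta>]) auto
    then show "0 \<le> (SUP x\<in>A. f x)" using x0 f0 by (intro cSUP_upper2) auto
    show "(SUP x\<in>A. f x) \<le> \<delta>" using A fd by (intro cSUP_least) auto
  qed
  have S2: "0 \<le> (SUP y\<in>B. g y) \<and> (SUP y\<in>B. g y) \<le> \<delta>"
  proof
    have "bdd_above (g ` B)" using gd by (intro bdd_aboveI[of _ \<delta>]) auto
    then show "0 \<le> (SUP y\<in>B. g y)" using y0 g0 by (intro cSUP_upper2) auto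
    show "(SUP y\<in>B. g y) \<le> \<delta>" using B gd by (intro cSUP_least) auto
  qed
  have "hdist I A B = max (SUP x\<in>A. f x) (SUP y\<in>B. g y)" unfolding hdist_def f_def g_def ..
  then show ?thesis using S1 S2 by (auto simp: max_def)
qed

lemma tendsto_zero_lower_bound:
  fixes X :: "nat \<Rightarrow> real"
  assumes X: "X \<longlonglongrightarrow> 0" and ev: "eventually (\<lambda>m. c - X m \<le> q) sequentially"
  shows "c \<le> q"
proof -
  have "(\<lambda>m. c - X m) \<longlonglongrightarrow> c - 0" by (intro tendsto_intros X)
  then show ?thesis using tendsto_le[OF trivial_limit_sequentially tendsto_const _ ev] by simp
qed

lemma LIMSEQ_one_over_Suc: "(\<lambda>m. 1 / (real m + 1)) \<longlonglongrightarrow> 0"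
  using LIMSEQ_inverse_real_of_nat by (simp add: inverse_eq_divide add.commute)

lemma ge_1_of_inverse_bounds:
  fixes q :: real
  assumes "\<And>\<epsilon>. \<epsilon> > 0 \<Longrightarrow> 1 / (1 + \<epsilon>) \<le> q" and "q \<le> 1"
  shows "q = 1"
proof (rule ccontr)
  assume "q \<noteq> 1"
  then have q: "q < 1" using assms(2) by simp
  define \<epsilon> where "\<epsilon> = (1 - q) / 2"
  have eps: "\<epsilon> > 0" unfolding \<epsilon>_def using q by simp
  have "1 \<le> q * (1 + \<epsilon>)" using assms(1)[OF eps] eps by (simp add: field_simps)
  moreover have "q * \<epsilon> \<le> \<epsilon>" using mult_right_mono[of q 1 \<epsilon>] q eps by simp
  ultimately show False unfolding \<epsilon>_def using q by (simp add: field_simps)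
qed

lemma bounded_finite_coords_convergent_subseq:
  fixes f :: "nat \<Rightarrow> 'i \<Rightarrow> complex"
  assumes J: "finite J" and b: "\<forall>m. \<forall>i\<in>J. cmod (f m i) \<le> B"
  shows "\<exists>r. strict_mono r \<and> (\<forall>i\<in>J. \<exists>l. (\<lambda>m. f (r m) i) \<longlonglongrightarrow> l)"
  using J b
proof (induction J rule: finite_induct)
  case empty
  show ?case by (rule exI[of _ "\<lambda>x. x"]) (simp add: strict_mono_def)
next
  case (insert j J)
  obtain r1 where r1: "strict_mono r1" "\<forall>i\<in>J. \<exists>l. (\<lambda>m. f (r1 m) i) \<longlonglongrightarrow> l" using insert by auto
  have "bounded (range (\<lambda>m. f (r1 m) j))"
    unfolding bounded_iff using insert.prems by auto
  then obtain l r2 where r2: "strict_mono r2" "((\<lambda>m. f (r1 m) j) \<circ> r2) \<longlonglongrightarrow> l"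
    using bounded_imp_convergent_subsequence by blast
  have sm: "strict_mono (r1 \<circ> r2)" using r1(1) r2(1) by (rule strict_mono_o)
  have "\<forall>i\<in>insert j J. \<exists>l. (\<lambda>m. f ((r1 \<circ> r2) m) i) \<longlonglongrightarrow> l"
  proof
    fix i assume "i \<in> insert j J"
    then show "\<exists>l. (\<lambda>m. f ((r1 \<circ> r2) m) i) \<longlonglongrightarrow> l"
    proof
      assume "i = j" then show ?thesis using r2(2) by (auto simp: comp_def)
    next
      assume "i \<in> J"
      then obtain l' where "(\<lambda>m. f (r1 m) i) \<longlonglongrightarrow> l'" using r1(2) by blast
      then have "((\<lambda>m. f (r1 m) i) \<circ> r2) \<longlonglongrightarrow> l'" using r2(1) by (rule LIMSEQ_subseq_LIMSEQ)
      then show ?thesis by (auto simp: comp_def)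
    qed
  qed
  then show ?case using sm by blast
qed

lemma unit_vectors_convergent_subseq:
  fixes U :: "nat \<Rightarrow> 'i \<Rightarrow> complex"
  assumes I: "finite I" and U: "\<forall>m. U m \<in> cvecs I" "\<forall>m. sqnorm I (U m) = 1"
  shows "\<exists>r u. strict_mono r \<and> u \<in> cvecs I \<and> sqnorm I u = 1 \<and> (\<forall>i. (\<lambda>m. U (r m) i) \<longlonglongrightarrow> u i)"
proof -
  have bnd: "\<forall>m. \<forall>i\<in>I. cmod (U m i) \<le> 1"
  proof (intro allI ballI)
    fix m i assume i: "i \<in> I"
    have "(cmod (U m i))^2 \<le> sqnorm I (U m)" unfolding sqnorm_def by (rule member_le_sum[OF i _ I]) auto
    then show "cmod (U m i) \<le> 1" using U(2) abs_square_le_1[of "cmod (U m i)"] by simp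
  qed
  obtain r where r: "strict_mono r" "\<forall>i\<in>I. \<exists>l. (\<lambda>m. U (r m) i) \<longlonglongrightarrow> l"
    using bounded_finite_coords_convergent_subseq[OF I bnd] by blast
  obtain L where L: "\<forall>i\<in>I. (\<lambda>m. U (r m) i) \<longlonglongrightarrow> L i" using bchoice[OF r(2)] by (elim exE)
  define u where "u i = (if i \<in> I then L i else 0)" for i
  have uc: "u \<in> cvecs I" unfolding u_def cvecs_def by auto
  have conv: "(\<lambda>m. U (r m) i) \<longlonglongrightarrow> u i" for i
  proof (cases "i \<in> I")
    case True
    then show ?thesis using L by (simp add: u_def)
  next
    case False
    then have "U (r m) i = 0" for m using U(1) by (simp add: cvecs_def)
    then show ?thesis using False by (simp add: u_def)
  qed
  have "(\<lambda>m. sqnorm I (U (r m))) \<longlonglongrightarrow> sqnorm I u" using conv by (intro tendsto_sqnorm) auto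
  then have "sqnorm I u = 1" using U(2) LIMSEQ_unique[OF _ tendsto_const[of 1]] by simp
  then show ?thesis using r(1) uc conv by blast
qed

lemma pdist_pt_tendsto_0:
  fixes U :: "nat \<Rightarrow> 'i \<Rightarrow> complex"
  assumes I: "finite I" and conv: "\<forall>i. (\<lambda>m. U m i) \<longlonglongrightarrow> u i"
    and U: "\<forall>m. sqnorm I (U m) = 1" and u: "sqnorm I u = 1"
  shows "(\<lambda>m. pdist I (pt (U m)) (pt u)) \<longlonglongrightarrow> 0"
proof (rule Lim_null_comparison)
  have "\<forall>i\<in>I. (\<lambda>m. U m i - u i) \<longlonglongrightarrow> u i - u i" using conv tendsto_diff[OF _ tendsto_const] by blast
  then have "(\<lambda>m. sqnorm I (\<lambda>i. U m i - u i)) \<longlonglongrightarrow> sqnorm I (\<lambda>i. u i - u i)" by (rule tendsto_sqnorm)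
  then have "(\<lambda>m. sqrt (sqnorm I (\<lambda>i. U m i - u i))) \<longlonglongrightarrow> sqrt 0"
    unfolding sqnorm_def by (intro tendsto_real_sqrt) simp
  then show "(\<lambda>m. 4 * vnorm I (\<lambda>i. U m i - u i)) \<longlonglongrightarrow> 0" unfolding vnorm_def
    using tendsto_mult_right_zero by auto
  show "\<forall>\<^sub>F m in sequentially. norm (pdist I (pt (U m)) (pt u)) \<le> 4 * vnorm I (\<lambda>i. U m i - u i)"
  proof (intro always_eventually allI)
    fix m
    have "line_dist I (U m) u \<le> 4 * vnorm I (\<lambda>i. U m i - u i) / vnorm I (U m)"
      by (rule line_dist_le) (use U u in auto)
    moreover have "vnorm I (U m) = 1" unfolding vnorm_def using U by simp
    ultimately show "norm (pdist I (pt (U m)) (pt u)) \<le> 4 * vnorm I (\<lambda>i. U m i - u i)"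
      unfolding pdist_pt using line_dist_nonneg[of I "U m" u] by simp
  qed
qed

section \<open>Powers of the Jordan block\<close>

text \<open>(J^k v)_i = \<Sum>_r binom(k,r) v_{i+r}; since gchoose is a polynomial in k, this is the
  k-th power of J for negative k as well (jpow_jpow).\<close>
definition jpow :: "nat \<Rightarrow> int \<Rightarrow> (nat \<Rightarrow> complex) \<Rightarrow> (nat \<Rightarrow> complex)" where
  "jpow n k v = (\<lambda>i. if i \<in> {1..n+1} then (\<Sum>r\<le>n. (of_int k gchoose r) * v (i + r)) else 0)"

lemma jpow_cvecs: "jpow n k v \<in> cvecs {1..n+1}"
  unfolding jpow_def cvecs_def by auto

lemma jpow_outside: "i \<notin> {1..n+1} \<Longrightarrow> jpow n k w i = 0"
  using cvecs_out[OF jpow_cvecs] by blast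

lemma sum_cvecs_extend:
  fixes n M i :: nat
  assumes v: "v \<in> cvecs {1..n+1}" and i: "i \<ge> 1" and M: "n \<le> M"
  shows "(\<Sum>r\<le>M. g r * v (i + r)) = (\<Sum>r\<le>n. g r * v (i + r))"
proof (rule sum.mono_neutral_right)
  show "\<forall>r\<in>{..M} - {..n}. g r * v (i + r) = 0"
  proof
    fix r assume "r \<in> {..M} - {..n}"
    then have "\<not> r \<le> n" by auto
    then have "\<not> (i + r \<le> n + 1)" using i by arith
    then have "i + r \<notin> {1..n+1}" by simp
    then show "g r * v (i + r) = 0" using cvecs_out[OF v] by simp
  qed
qed (use M in auto)

lemma mulv_jordan1:
  assumes v: "v \<in> cvecs {1..n+1}"
  shows "mulv {1..n+1} (jordan1 n) v = (\<lambda>i. if i \<in> {1..n+1} then v i + v (Suc i) else 0)"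
proof
  fix i
  show "mulv {1..n+1} (jordan1 n) v i = (if i \<in> {1..n+1} then v i + v (Suc i) else 0)"
  proof (cases "i \<in> {1..n+1}")
    case True
    have "(\<Sum>j\<in>{1..n+1}. jordan1 n i j * v j) = (\<Sum>j\<in>{1..n+1}. if j \<in> {i, Suc i} then v j else 0)"
      using True by (intro sum.cong) (auto simp: jordan1_def)
    also have "\<dots> = (\<Sum>j\<in>{1..n+1} \<inter> {i, Suc i}. v j)"
      by (simp add: sum.inter_restrict)
    also have "\<dots> = v i + v (Suc i)"
    proof (cases "Suc i \<in> {1..n+1}")
      case True2: True
      then have "{1..n+1} \<inter> {i, Suc i} = {i, Suc i}" using True by auto
      then show ?thesis by simp
    next
      case False
      then have "{1..n+1} \<inter> {i, Suc i} = {i}" using True by auto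
      then show ?thesis using cvecs_out[OF v False] by simp
    qed
    finally show ?thesis using True unfolding mulv_def by simp
  next
    case False
    then show ?thesis unfolding mulv_def by (simp only: if_not_P[OF False] if_False)
  qed
qed

lemma jpow_0: "v \<in> cvecs {1..n+1} \<Longrightarrow> jpow n 0 v = v"
  unfolding jpow_def by (rule ext) (auto simp: gbinomial_0_left sum.atMost_Suc_shift cvecs_out
      intro: sum.neutral split: if_splits, subst sum.atMost_shift, simp)

lemma mulv_jordan1_jpow:
  assumes v: "v \<in> cvecs {1..n+1}"
  shows "mulv {1..n+1} (jordan1 n) (jpow n k v) = jpow n (k+1) v"
proof
  fix i
  define g where "g r = (of_int k gchoose r :: complex)" for r
  show "mulv {1..n+1} (jordan1 n) (jpow n k v) i = jpow n (k+1) v i"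
  proof (cases "i \<in> {1..n+1}")
    case False
    then show ?thesis unfolding mulv_def jpow_def by (simp only: if_not_P[OF False] if_False)
  next
    case True
    then have i1: "i \<ge> 1" by simp
    have A: "jpow n k v i = (\<Sum>r\<le>n. g r * v (i+r))" using True unfolding jpow_def g_def by simp
    have B: "jpow n k v (Suc i) = (\<Sum>r\<le>n. g r * v (i + Suc r))"
    proof (cases "Suc i \<in> {1..n+1}")
      case True
      then show ?thesis unfolding jpow_def g_def by simp
    next
      case False
      then have "v (i + Suc r) = 0" for r using cvecs_out[OF v] by simp
      then show ?thesis using False unfolding jpow_def by simp
    qed
    have A2: "(\<Sum>r\<le>n. g r * v (i+r)) = v i + (\<Sum>r\<le>n. g (Suc r) * v (i + Suc r))"
    proof -
      have "(\<Sum>r\<le>n. g r * v (i+r)) = (\<Sum>r\<le>Suc n. g r * v (i+r))"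
        using sum_cvecs_extend[OF v i1, of "Suc n" g] by simp
      also have "\<dots> = v i + (\<Sum>r\<le>n. g (Suc r) * v (i + Suc r))"
        by (subst sum.atMost_Suc_shift) (simp add: g_def)
      finally show ?thesis .
    qed
    have "jpow n (k+1) v i = (\<Sum>r\<le>n. (of_int k + 1 gchoose r) * v (i+r))" using True unfolding jpow_def by simp
    also have "\<dots> = (\<Sum>r\<le>Suc n. (of_int k + 1 gchoose r) * v (i+r))"
      using sum_cvecs_extend[OF v i1, of "Suc n" "\<lambda>r. (of_int k + 1 gchoose r)"] by simp
    also have "\<dots> = v i + (\<Sum>r\<le>n. (of_int k + 1 gchoose Suc r) * v (i + Suc r))"
      by (subst sum.atMost_Suc_shift) simp
    also have "\<dots> = v i + (\<Sum>r\<le>n. g r * v (i + Suc r)) + (\<Sum>r\<le>n. g (Suc r) * v (i + Suc r))"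
      unfolding gbinomial_Suc_Suc g_def by (simp add: distrib_right sum.distrib)
    also have "\<dots> = jpow n k v i + jpow n k v (Suc i)" unfolding A B A2 by simp
    finally show ?thesis unfolding mulv_jordan1[OF jpow_cvecs] using True by simp
  qed
qed

lemma mulv_jordan1_inj:
  assumes x: "x \<in> cvecs {1..n+1}" and y: "y \<in> cvecs {1..n+1}"
    and eq: "mulv {1..n+1} (jordan1 n) x = mulv {1..n+1} (jordan1 n) y"
  shows "x = y"
proof -
  have step: "x i + x (Suc i) = y i + y (Suc i)" if "i \<in> {1..n+1}" for i
    using fun_cong[OF eq, of i] that unfolding mulv_jordan1[OF x] mulv_jordan1[OF y] by simp
  have main: "\<forall>i. n + 1 - i = m \<longrightarrow> i \<in> {1..n+1} \<longrightarrow> x i = y i" for m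
  proof (induction m)
    case 0
    show ?case
    proof (intro allI impI)
      fix i assume "n + 1 - i = 0" "i \<in> {1..n+1}"
      then have "i = n+1" by simp
      moreover have "x (Suc (n+1)) = 0" "y (Suc (n+1)) = 0" using cvecs_out[OF x] cvecs_out[OF y] by auto
      ultimately show "x i = y i" using step[of i] by simp
    qed
  next
    case (Suc m)
    show ?case
    proof (intro allI impI)
      fix i assume a: "n + 1 - i = Suc m" "i \<in> {1..n+1}"
      then have "n + 1 - Suc i = m" "Suc i \<in> {1..n+1}" by auto
      then have "x (Suc i) = y (Suc i)" using Suc by blast
      then show "x i = y i" using step[OF a(2)] by simp
    qed
  qed
  show ?thesis
  proof
    fix i show "x i = y i"
      using main[of "n+1-i"] cvecs_out[OF x, of i] cvecs_out[OF y, of i] by (cases "i \<in> {1..n+1}") auto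
  qed
qed

lemma jpow_jpow:
  assumes v: "v \<in> cvecs {1..n+1}"
  shows "jpow n j (jpow n k v) = jpow n (j + k) v"
proof (induction j rule: int_induct[where k=0])
  case base
  then show ?case using jpow_0[OF jpow_cvecs] by simp
next
  case (step1 i)
  have "jpow n (i+1) (jpow n k v) = mulv {1..n+1} (jordan1 n) (jpow n i (jpow n k v))"
    using mulv_jordan1_jpow[OF jpow_cvecs] by simp
  also have "\<dots> = jpow n (i + k + 1) v" using step1(2) mulv_jordan1_jpow[OF v] by simp
  finally show ?case by (simp add: algebra_simps)
next
  case (step2 i)
  have "mulv {1..n+1} (jordan1 n) (jpow n (i-1) (jpow n k v)) = jpow n i (jpow n k v)"
    using mulv_jordan1_jpow[OF jpow_cvecs, of n "i-1"] by simp
  also have "\<dots> = jpow n (i+k) v" by (rule step2(2))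
  also have "\<dots> = mulv {1..n+1} (jordan1 n) (jpow n (i - 1 + k) v)"
    using mulv_jordan1_jpow[OF v, of "i-1+k"] by (simp add: algebra_simps)
  finally show ?case using mulv_jordan1_inj[OF jpow_cvecs jpow_cvecs] by blast
qed

lemma jpow_scale: "jpow n k (\<lambda>i. c * v i) = (\<lambda>i. c * jpow n k v i)"
  unfolding jpow_def by (auto simp: sum_distrib_left algebra_simps)

lemma jpow_add_vec: "jpow n k (\<lambda>i. u i + w i) = (\<lambda>i. jpow n k u i + jpow n k w i)"
  unfolding jpow_def by (auto simp: sum.distrib algebra_simps)

lemma jpow_zero_vec: "jpow n k (\<lambda>i. 0) = (\<lambda>i. 0)"
  unfolding jpow_def by auto

lemma jpow_neg_cancel: "v \<in> cvecs {1..n+1} \<Longrightarrow> jpow n (-k) (jpow n k v) = v"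
  using jpow_jpow[of v n "-k" k] jpow_0[of v n] by simp

lemma jpow_nonzero: "v \<in> cvecs {1..n+1} \<Longrightarrow> v \<noteq> (\<lambda>i. 0) \<Longrightarrow> jpow n k v \<noteq> (\<lambda>i. 0)"
  using jpow_neg_cancel[of v n k] jpow_zero_vec[of n "-k"] by auto

lemma mulv_scale: "mulv I A (\<lambda>i. c * v i) = (\<lambda>i. c * mulv I A v i)"
  unfolding mulv_def by (auto simp: sum_distrib_left algebra_simps)

lemma mulv_jordan1_eq_jpow: "v \<in> cvecs {1..n+1} \<Longrightarrow> mulv {1..n+1} (jordan1 n) v = jpow n 1 v"
  using mulv_jordan1_jpow[of v n 0] jpow_0[of v n] by simp

lemma pmap_jordan1_pt: "v \<in> cvecs {1..n+1} \<Longrightarrow> pmap {1..n+1} (jordan1 n) (pt v) = pt (jpow n 1 v)"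
proof -
  assume v: "v \<in> cvecs {1..n+1}"
  obtain c where c: "c \<noteq> 0" "(SOME x. x \<in> pt v) = (\<lambda>i. c * v i)" using some_in_pt by blast
  show ?thesis unfolding pmap_def c(2) mulv_scale mulv_jordan1_eq_jpow[OF v] pt_scale[OF c(1)] ..
qed

lemma pmap_jordan1_pow_pt: "v \<in> cvecs {1..n+1} \<Longrightarrow> (pmap {1..n+1} (jordan1 n) ^^ m) (pt v) = pt (jpow n (int m) v)"
proof (induction m)
  case 0
  then show ?case using jpow_0[of v n] by simp
next
  case (Suc m)
  have "(pmap {1..n+1} (jordan1 n) ^^ Suc m) (pt v) = pmap {1..n+1} (jordan1 n) (pt (jpow n (int m) v))"
    using Suc by simp
  also have "\<dots> = pt (jpow n 1 (jpow n (int m) v))" by (rule pmap_jordan1_pt[OF jpow_cvecs])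
  also have "\<dots> = pt (jpow n (int (Suc m)) v)" using jpow_jpow[OF Suc.prems, of 1 "int m"] by (simp add: add.commute)
  finally show ?case .
qed

lemma inj_on_pmap_jordan1: "inj_on (pmap {1..n+1} (jordan1 n)) (PS {1..n+1})"
proof
  fix p q assume p: "p \<in> PS {1..n+1}" and q: "q \<in> PS {1..n+1}"
    and eq: "pmap {1..n+1} (jordan1 n) p = pmap {1..n+1} (jordan1 n) q"
  obtain u where u: "u \<in> cvecs {1..n+1}" "p = pt u" using p unfolding PS_iff by auto
  obtain w where w: "w \<in> cvecs {1..n+1}" "q = pt w" using q unfolding PS_iff by auto
  have "pt (jpow n 1 u) = pt (jpow n 1 w)" using eq unfolding u(2) w(2) pmap_jordan1_pt[OF u(1)] pmap_jordan1_pt[OF w(1)] .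
  then obtain c where c: "c \<noteq> 0" "jpow n 1 u = (\<lambda>i. c * jpow n 1 w i)" using pt_eqD by blast
  then have "jpow n (-1) (jpow n 1 u) = jpow n (-1) (jpow n 1 (\<lambda>i. c * w i))" by (simp add: jpow_scale)
  then have "u = (\<lambda>i. c * w i)" using jpow_neg_cancel[OF u(1), of 1] jpow_neg_cancel[of "\<lambda>i. c * w i" n 1] w(1)
    by (simp add: cvecs_def)
  then show "p = q" unfolding u(2) w(2) using pt_scale[OF c(1)] by simp
qed

lemma inv_pmap_jordan1_pt:
  assumes v: "v \<in> cvecs {1..n+1}" "v \<noteq> (\<lambda>i. 0)"
  shows "inv_into (PS {1..n+1}) (pmap {1..n+1} (jordan1 n)) (pt v) = pt (jpow n (-1) v)"
proof -
  have mem: "pt (jpow n (-1) v) \<in> PS {1..n+1}" unfolding PS_iff using jpow_cvecs jpow_nonzero[OF v] by blast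
  have "pmap {1..n+1} (jordan1 n) (pt (jpow n (-1) v)) = pt v"
    using pmap_jordan1_pt[OF jpow_cvecs, of n "-1" v] jpow_jpow[OF v(1), of 1 "-1"] jpow_0[OF v(1)] by simp
  then show ?thesis using inv_into_f_f[OF inj_on_pmap_jordan1 mem] by simp
qed

lemma inv_pmap_jordan1_pow_pt:
  assumes v: "v \<in> cvecs {1..n+1}" "v \<noteq> (\<lambda>i. 0)"
  shows "(inv_into (PS {1..n+1}) (pmap {1..n+1} (jordan1 n)) ^^ m) (pt v) = pt (jpow n (- int m) v)"
proof (induction m)
  case 0
  then show ?case using jpow_0[OF v(1)] by simp
next
  case (Suc m)
  have "(inv_into (PS {1..n+1}) (pmap {1..n+1} (jordan1 n)) ^^ Suc m) (pt v)
     = inv_into (PS {1..n+1}) (pmap {1..n+1} (jordan1 n)) (pt (jpow n (- int m) v))" using Suc by simp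
  also have "\<dots> = pt (jpow n (-1) (jpow n (- int m) v))" by (rule inv_pmap_jordan1_pt[OF jpow_cvecs jpow_nonzero[OF v]])
  also have "\<dots> = pt (jpow n (- int (Suc m)) v)" using jpow_jpow[OF v(1), of "-1" "- int m"] by simp
  finally show ?case .
qed

lemma zpow_jordan1_pt:
  assumes v: "v \<in> cvecs {1..n+1}" "v \<noteq> (\<lambda>i. 0)"
  shows "zpow (PS {1..n+1}) (pmap {1..n+1} (jordan1 n)) k (pt v) = pt (jpow n k v)"
  unfolding zpow_def using pmap_jordan1_pow_pt[OF v(1)] inv_pmap_jordan1_pow_pt[OF v] by auto

definition gamma_pow :: "nat \<Rightarrow> int \<Rightarrow> (nat \<Rightarrow> complex) set \<Rightarrow> (nat \<Rightarrow> complex) set" where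
  "gamma_pow n k = restrict (zpow (PS {1..n+1}) (pmap {1..n+1} (jordan1 n)) k) (PS {1..n+1})"

lemma cyclic_jordan1_eq: "cyclic (PS {1..n+1}) (pmap {1..n+1} (jordan1 n)) = range (gamma_pow n)"
  unfolding cyclic_def gamma_pow_def by auto

lemma gamma_pow_pt: "v \<in> cvecs {1..n+1} \<Longrightarrow> v \<noteq> (\<lambda>i. 0) \<Longrightarrow> gamma_pow n k (pt v) = pt (jpow n k v)"
  unfolding gamma_pow_def using zpow_jordan1_pt[of v n k] by (auto simp: PS_iff)

lemma jpow_e1: "jpow n k (e 1) = e 1"
proof
  fix i
  show "jpow n k (e 1) i = e 1 i"
  proof (cases "i \<in> {1..n+1}")
    case True
    have "jpow n k (e 1) i = (\<Sum>r\<le>n. (of_int k gchoose r) * e 1 (i + r))" using True unfolding jpow_def by simp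
    also have "\<dots> = (\<Sum>r\<le>n. if r = 0 \<and> i = 1 then 1 else 0)"
      by (rule sum.cong) (use True in \<open>auto simp: e_def\<close>)
    also have "\<dots> = e 1 i" unfolding e_def by (cases "i = 1") auto
    finally show ?thesis .
  next
    case False
    then show ?thesis using jpow_outside[OF False] unfolding e_def by auto
  qed
qed

lemma jpow_e2:
  assumes n: "n \<ge> 1"
  shows "jpow n k (e 2) 1 = of_int k" "jpow n k (e 2) 2 = 1"
proof -
  have "jpow n k (e 2) 1 = (\<Sum>r\<le>n. (of_int k gchoose r) * e 2 (1 + r))" unfolding jpow_def by simp
  also have "\<dots> = (\<Sum>r\<le>n. if r = 1 then (of_int k gchoose r) else 0)"
    by (rule sum.cong) (auto simp: e_def)
  also have "\<dots> = of_int k" using n by (simp add: sum.delta)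
  finally show "jpow n k (e 2) 1 = of_int k" .
  have "jpow n k (e 2) 2 = (\<Sum>r\<le>n. (of_int k gchoose r) * e 2 (2 + r))" using n unfolding jpow_def by simp
  also have "\<dots> = (\<Sum>r\<le>n. if r = 0 then (of_int k gchoose r) else 0)"
    by (rule sum.cong) (auto simp: e_def)
  also have "\<dots> = 1" by (simp add: sum.delta)
  finally show "jpow n k (e 2) 2 = 1" .
qed

lemma inj_gamma_pow: "n \<ge> 1 \<Longrightarrow> inj (gamma_pow n)"
proof
  fix j k assume n: "n \<ge> 1" and eq: "gamma_pow n j = gamma_pow n k"
  have e2: "e 2 \<in> cvecs {1..n+1}" using n by (intro e_cvecs) auto
  have "pt (jpow n j (e 2)) = pt (jpow n k (e 2))" using fun_cong[OF eq, of "pt (e 2)"]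
    unfolding gamma_pow_pt[OF e2 e_nonzero] .
  then obtain c where c: "jpow n j (e 2) = (\<lambda>i. c * jpow n k (e 2) i)" using pt_eqD by blast
  have "c = 1" using fun_cong[OF c, of 2] jpow_e2[OF n] by simp
  then have "(of_int j :: complex) = of_int k" using fun_cong[OF c, of 1] jpow_e2[OF n] by simp
  then show "j = k" by simp
qed

lemma inj_eventually_abs_ge:
  assumes "inj (\<kappa>::nat\<Rightarrow>int)"
  shows "eventually (\<lambda>m. N \<le> \<bar>\<kappa> m\<bar>) sequentially"
proof -
  have "finite (\<kappa> -` {-N<..<N})" by (rule finite_vimageI) (use assms in auto)
  moreover have "{m. \<not> N \<le> \<bar>\<kappa> m\<bar>} \<subseteq> \<kappa> -` {-N<..<N}" by auto
  ultimately have "finite {m. \<not> N \<le> \<bar>\<kappa> m\<bar>}" by (rule finite_subset[rotated])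
  then show ?thesis unfolding cofinite_eq_sequentially[symmetric] eventually_cofinite .
qed

lemma cyclic_jordan1_seq:
  assumes n: "n \<ge> 1" and g: "inj g" "\<forall>m. g m \<in> cyclic (PS {1..n+1}) (pmap {1..n+1} (jordan1 n))"
  shows "\<exists>\<kappa>. inj \<kappa> \<and> (\<forall>m. g m = gamma_pow n (\<kappa> m))"
proof -
  have "\<forall>m. \<exists>k. g m = gamma_pow n k" using g(2) unfolding cyclic_jordan1_eq by auto
  then obtain \<kappa> where k: "\<forall>m. g m = gamma_pow n (\<kappa> m)" by metis
  have "inj \<kappa>" using g(1) k unfolding inj_def by metis
  then show ?thesis using k by blast
qed

section \<open>Binomial growth and concentration at [e_1]\<close>

lemma div_fact_le: "0 \<le> (a::real) \<Longrightarrow> a / fact r \<le> a"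
  using divide_left_mono[of 1 "fact r" a] by simp

lemma norm_gbinomial_le: "cmod (of_int k gchoose r :: complex) \<le> (real_of_int \<bar>k\<bar> + r)^r"
proof -
  have "cmod (of_int k gchoose r :: complex) = (\<Prod>i=0..<r. cmod (of_int k - of_nat i)) / fact r"
    unfolding gbinomial_prod_rev by (simp add: norm_divide prod_norm[symmetric])
  also have "\<dots> \<le> (\<Prod>i=0..<r. cmod (of_int k - of_nat i))"
    by (rule div_fact_le) (auto intro: prod_nonneg)
  also have "\<dots> \<le> (\<Prod>i=0..<r. real_of_int \<bar>k\<bar> + r)"
  proof (rule prod_mono)
    fix i assume i: "i \<in> {0..<r}"
    have "cmod (of_int k - of_nat i :: complex) \<le> cmod (of_int k :: complex) + cmod (of_nat i :: complex)"
      by (rule norm_triangle_ineq4)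
    also have "\<dots> = real_of_int \<bar>k\<bar> + i" by (simp del: of_int_abs add: norm_of_int)
    also have "\<dots> \<le> real_of_int \<bar>k\<bar> + r" using i by simp
    finally show "0 \<le> cmod (of_int k - of_nat i :: complex) \<and> cmod (of_int k - of_nat i :: complex) \<le> real_of_int \<bar>k\<bar> + r" by simp
  qed
  also have "\<dots> = (real_of_int \<bar>k\<bar> + r)^r" by simp
  finally show ?thesis .
qed

lemma norm_gbinomial_ge:
  assumes "real d \<le> real_of_int \<bar>k\<bar>"
  shows "(real_of_int \<bar>k\<bar> - d)^d / fact d \<le> cmod (of_int k gchoose d :: complex)"
proof -
  have "(\<Prod>i=0..<d. real_of_int \<bar>k\<bar> - d) \<le> (\<Prod>i=0..<d. cmod (of_int k - of_nat i :: complex))"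
  proof (rule prod_mono)
    fix i assume i: "i \<in> {0..<d}"
    have "real_of_int \<bar>k\<bar> - d \<le> cmod (of_int k :: complex) - cmod (of_nat i :: complex)"
      using i by (simp del: of_int_abs add: norm_of_int)
    also have "\<dots> \<le> cmod (of_int k - of_nat i :: complex)" by (rule norm_triangle_ineq2)
    finally show "0 \<le> real_of_int \<bar>k\<bar> - d \<and> real_of_int \<bar>k\<bar> - d \<le> cmod (of_int k - of_nat i :: complex)"
      using assms by simp
  qed
  then have "(real_of_int \<bar>k\<bar> - d)^d \<le> (\<Prod>i=0..<d. cmod (of_int k - of_nat i :: complex))" by simp
  then have "(real_of_int \<bar>k\<bar> - d)^d / fact d \<le> (\<Prod>i=0..<d. cmod (of_int k - of_nat i :: complex)) / fact d"
    by (rule divide_right_mono) simp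
  also have "\<dots> = cmod (of_int k gchoose d :: complex)"
    unfolding gbinomial_prod_rev by (simp add: norm_divide prod_norm[symmetric])
  finally show ?thesis .
qed

lemma gbinomial_dominates_lower:
  fixes d n :: nat and c K :: real
  assumes d1: "1 \<le> d" and dn: "d \<le> n" and c: "c > 0"
  shows "\<exists>N::real. \<forall>k::int. N \<le> \<bar>k\<bar> \<longrightarrow>
            K * (\<Sum>r<d. cmod (of_int k gchoose r :: complex)) \<le> c * cmod (of_int k gchoose d :: complex)"
proof -
  define N where "N = max (2 * real n + 1) (2 * \<bar>K\<bar> * d * 4^(d-1) * fact d / c)"
  show ?thesis
  proof (intro exI allI impI)
    fix k :: int assume kN: "N \<le> \<bar>k\<bar>"
    define x where "x = real_of_int \<bar>k\<bar>"
    define y where "y = x / 2"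
    have x1: "2 * real n + 1 \<le> x" using kN unfolding N_def x_def by simp
    have xK: "2 * \<bar>K\<bar> * d * 4^(d-1) * fact d / c \<le> x" using kN unfolding N_def x_def by simp
    have y0: "y \<ge> 0" using x1 unfolding y_def by simp
    have B: "(\<Sum>r<d. cmod (of_int k gchoose r :: complex)) \<le> d * (4 * y)^(d-1)"
    proof -
      have "(\<Sum>r<d. cmod (of_int k gchoose r :: complex)) \<le> (\<Sum>r<d. (4 * y)^(d-1))"
      proof (rule sum_mono)
        fix r assume r: "r \<in> {..<d}"
        have "cmod (of_int k gchoose r :: complex) \<le> (x + r)^r" unfolding x_def by (rule norm_gbinomial_le)
        also have "\<dots> \<le> (4*y)^r" by (rule power_mono) (use x1 r dn in \<open>auto simp: y_def\<close>)
        also have "\<dots> \<le> (4*y)^(d-1)" by (rule power_increasing) (use x1 r in \<open>auto simp: y_def\<close>)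
        finally show "cmod (of_int k gchoose r :: complex) \<le> (4 * y)^(d-1)" .
      qed
      then show ?thesis by simp
    qed
    have L: "y^d / fact d \<le> cmod (of_int k gchoose d :: complex)"
    proof -
      have "y^d / fact d \<le> (x - d)^d / fact d"
        by (intro divide_right_mono power_mono) (use x1 dn in \<open>auto simp: y_def\<close>)
      also have "\<dots> \<le> cmod (of_int k gchoose d :: complex)" unfolding x_def
        by (rule norm_gbinomial_ge) (use x1 dn in \<open>auto simp: x_def\<close>)
      finally show ?thesis .
    qed
    have key: "\<bar>K\<bar> * d * 4^(d-1) * fact d \<le> c * y" using xK c unfolding y_def
      by (simp add: field_simps)
    have "K * (\<Sum>r<d. cmod (of_int k gchoose r :: complex)) \<le> \<bar>K\<bar> * (d * (4 * y)^(d-1))"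
      by (rule order_trans[OF abs_ge_self[THEN mult_right_mono] mult_left_mono[OF B]]) (auto intro: sum_nonneg)
    also have "\<dots> = (\<bar>K\<bar> * d * 4^(d-1) * fact d) * y^(d-1) / fact d" by (simp add: power_mult_distrib)
    also have "\<dots> \<le> (c * y) * y^(d-1) / fact d"
      by (intro divide_right_mono mult_right_mono key) (use y0 in auto)
    also have "\<dots> = c * (y^d / fact d)" using d1 by (cases d) auto
    also have "\<dots> \<le> c * cmod (of_int k gchoose d :: complex)" using L c by (intro mult_left_mono) auto
    finally show "K * (\<Sum>r<d. cmod (of_int k gchoose r :: complex)) \<le> c * cmod (of_int k gchoose d :: complex)" .
  qed
qed

lemma norm_gbinomial_sum_le:
  assumes s: "\<forall>j. cmod (w j) \<le> s"
  shows "cmod (\<Sum>r<c. (of_int k gchoose r) * w (i + r)) \<le> (\<Sum>r<c. cmod (of_int k gchoose r :: complex)) * s"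
proof -
  have "cmod (\<Sum>r<c. (of_int k gchoose r) * w (i + r)) \<le> (\<Sum>r<c. cmod (of_int k gchoose r :: complex) * s)"
    by (rule order_trans[OF norm_sum sum_mono]) (simp add: norm_mult mult_left_mono s)
  then show ?thesis by (simp add: sum_distrib_right)
qed

lemma jpow_eq_sum_lessThan:
  assumes w: "\<forall>j. D < j \<longrightarrow> w j = 0" and c: "c \<le> n + 1" and i: "i \<in> {1..n+1}" "D < i + c"
  shows "jpow n k w i = (\<Sum>r<c. (of_int k gchoose r) * w (i + r))"
proof -
  have "jpow n k w i = (\<Sum>r\<le>n. (of_int k gchoose r) * w (i + r))" using i unfolding jpow_def by simp
  also have "\<dots> = (\<Sum>r<c. (of_int k gchoose r) * w (i + r))"
    by (rule sum.mono_neutral_right) (use c i w in auto)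
  finally show ?thesis .
qed

lemma norm_jpow_le:
  assumes w: "\<forall>j. D < j \<longrightarrow> w j = 0" and s: "\<forall>j. cmod (w j) \<le> s"
    and c: "c \<le> n + 1" and i: "D < i + c"
  shows "cmod (jpow n k w i) \<le> (\<Sum>r<c. cmod (of_int k gchoose r :: complex)) * s"
proof (cases "i \<in> {1..n+1}")
  case False
  have "0 \<le> s" using s norm_ge_zero order_trans by blast
  then show ?thesis using jpow_outside[OF False] by (simp add: sum_nonneg)
next
  case True
  show ?thesis unfolding jpow_eq_sum_lessThan[OF w c True i] by (rule norm_gbinomial_sum_le[OF s])
qed

lemma jpow_first_coord:
  assumes w: "\<forall>j. d+1 < j \<longrightarrow> w j = 0" and dn: "d \<le> n"
  shows "jpow n k w 1 = (\<Sum>r<d. (of_int k gchoose r) * w (1 + r)) + (of_int k gchoose d) * w (d+1)"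
  using jpow_eq_sum_lessThan[OF w, of "Suc d" n 1 k] dn by simp

lemma norm_jpow_first_ge:
  assumes w: "\<forall>j. d+1 < j \<longrightarrow> w j = 0" and dn: "d \<le> n"
    and s: "\<forall>j. cmod (w j) \<le> s" and lead: "\<rho> * s \<le> cmod (w (d+1))"
  shows "cmod (of_int k gchoose d :: complex) * (\<rho> * s) - (\<Sum>r<d. cmod (of_int k gchoose r :: complex)) * s
         \<le> cmod (jpow n k w 1)"
proof -
  let ?g = "\<lambda>r. of_int k gchoose r :: complex"
  have "cmod (?g d) * (\<rho> * s) \<le> cmod (?g d * w (d+1))"
    unfolding norm_mult by (rule mult_left_mono[OF lead]) simp
  moreover have "cmod (?g d * w (d+1)) - cmod (\<Sum>r<d. ?g r * w (1 + r)) \<le> cmod (jpow n k w 1)"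
    unfolding jpow_first_coord[OF w dn]
    using norm_triangle_ineq2[of "?g d * w (d+1)" "- (\<Sum>r<d. ?g r * w (1 + r))"] by (simp add: add.commute)
  moreover have "cmod (\<Sum>r<d. ?g r * w (1 + r)) \<le> (\<Sum>r<d. cmod (?g r)) * s"
    by (rule norm_gbinomial_sum_le[OF s])
  ultimately show ?thesis by linarith
qed

lemma jpow_concentrates_first:
  fixes n d :: nat
  assumes dn: "d \<le> n" and rho: "\<rho> > 0" and eps: "\<epsilon> > 0"
  shows "\<exists>N::real. \<forall>k::int. N \<le> real_of_int \<bar>k\<bar> \<longrightarrow> (\<forall>w. w \<in> cvecs {1..n+1} \<longrightarrow> (\<forall>i. d+1 < i \<longrightarrow> w i = 0) \<longrightarrow>
     \<rho>^2 * sqnorm {1..n+1} w \<le> (cmod (w (d+1)))^2 \<longrightarrow>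
     (\<Sum>i\<in>{2..n+1}. (cmod (jpow n k w i))^2) \<le> \<epsilon> * (cmod (jpow n k w 1))^2)"
proof (cases "d = 0")
  case True
  show ?thesis
  proof (intro exI[of _ 0] allI impI)
    fix k :: int and w assume w: "w \<in> cvecs {1..n+1}" "\<forall>i. d+1 < i \<longrightarrow> w i = 0"
    have "jpow n k w i = 0" if "i \<in> {2..n+1}" for i
      using that w(2) True unfolding jpow_def by (auto intro!: sum.neutral)
    then show "(\<Sum>i\<in>{2..n+1}. (cmod (jpow n k w i))^2) \<le> \<epsilon> * (cmod (jpow n k w 1))^2"
      using eps by simp
  qed
next
  case False
  then have d1: "1 \<le> d" by simp
  define K where "K = 2 + real n / \<epsilon>"
  have K1: "K - 1 \<ge> 1" unfolding K_def using eps by simp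
  obtain N where N: "\<forall>k::int. N \<le> real_of_int \<bar>k\<bar> \<longrightarrow>
            K * (\<Sum>r<d. cmod (of_int k gchoose r :: complex)) \<le> \<rho> * cmod (of_int k gchoose d :: complex)"
    using gbinomial_dominates_lower[OF d1 dn rho, of K] by blast
  show ?thesis
  proof (intro exI[of _ N] allI impI)
    fix k :: int and w assume kN: "N \<le> real_of_int \<bar>k\<bar>" and w: "w \<in> cvecs {1..n+1}" "\<forall>i. d+1 < i \<longrightarrow> w i = 0"
      and wd: "\<rho>^2 * sqnorm {1..n+1} w \<le> (cmod (w (d+1)))^2"
    define s where "s = sqrt (sqnorm {1..n+1} w)"
    define B where "B = (\<Sum>r<d. cmod (of_int k gchoose r :: complex))"
    have s0: "s \<ge> 0" unfolding s_def by (simp add: sqnorm_nonneg)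
    have B0: "B \<ge> 0" unfolding B_def by (simp add: sum_nonneg)
    have wj: "\<forall>j. cmod (w j) \<le> s" unfolding s_def using norm_coord_le_sqnorm[OF w(1)] by blast
    have wd': "\<rho> * s \<le> cmod (w (d+1))"
    proof -
      have "sqrt (\<rho>^2 * sqnorm {1..n+1} w) \<le> sqrt ((cmod (w (d+1)))^2)" using wd by (rule real_sqrt_le_mono)
      then show ?thesis unfolding s_def using rho by (simp add: real_sqrt_mult)
    qed
    have tail: "cmod (jpow n k w i) \<le> B * s" if "i \<in> {2..n+1}" for i
      unfolding B_def by (rule norm_jpow_le[OF w(2) wj]) (use dn that in auto)
    have "K * B * s \<le> \<rho> * cmod (of_int k gchoose d :: complex) * s"
      using N kN s0 unfolding B_def by (intro mult_right_mono) auto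
    then have first: "(K - 1) * B * s \<le> cmod (jpow n k w 1)"
      using norm_jpow_first_ge[OF w(2) dn wj wd', of k] unfolding B_def by (simp add: algebra_simps)
    have "(\<Sum>i\<in>{2..n+1}. (cmod (jpow n k w i))^2) \<le> (\<Sum>i\<in>{2..n+1}. (B * s)^2)"
      by (rule sum_mono, rule power_mono[OF tail]) auto
    also have "\<dots> = \<epsilon> * ((K - 2) * (B * s)^2)" unfolding K_def using eps by simp
    also have "\<dots> \<le> \<epsilon> * ((K - 1)^2 * (B * s)^2)"
    proof -
      have "1 * (K - 1) \<le> (K - 1) * (K - 1)" using K1 by (intro mult_right_mono) auto
      then have "K - 2 \<le> (K - 1)^2" by (simp add: power2_eq_square)
      then show ?thesis using eps by (intro mult_left_mono mult_right_mono) auto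
    qed
    also have "\<dots> \<le> \<epsilon> * (cmod (jpow n k w 1))^2"
    proof -
      have "((K - 1) * (B * s))^2 \<le> (cmod (jpow n k w 1))^2"
        by (rule power_mono) (use first K1 B0 s0 in \<open>auto simp: mult.assoc\<close>)
      then show ?thesis using eps by (simp add: power_mult_distrib)
    qed
    finally show "(\<Sum>i\<in>{2..n+1}. (cmod (jpow n k w i))^2) \<le> \<epsilon> * (cmod (jpow n k w 1))^2" .
  qed
qed

lemma coord_frac_1_lower:
  fixes n :: nat
  assumes w: "w \<in> cvecs {1..n+1}" "w \<noteq> (\<lambda>i. 0)"
    and S: "(\<Sum>i\<in>{2..n+1}. (cmod (w i))^2) \<le> \<epsilon> * (cmod (w 1))^2"
  shows "1 / (1 + \<epsilon>) \<le> coord_frac {1..n+1} 1 w"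
proof -
  have np: "sqnorm {1..n+1} w > 0" using sqnorm_pos[OF _ w] by simp
  have "sqnorm {1..n+1} w = (cmod (w 1))^2 + (\<Sum>i\<in>{2..n+1}. (cmod (w i))^2)"
    unfolding sqnorm_def by (subst sum.atLeast_Suc_atMost) (auto simp: numeral_2_eq_2)
  then have "sqnorm {1..n+1} w \<le> (1 + \<epsilon>) * (cmod (w 1))^2" using S by (simp add: algebra_simps)
  then have le: "sqnorm {1..n+1} w \<le> (1 + \<epsilon>) * (cmod (w 1))^2" .
  have X: "(cmod (w 1))^2 > 0"
  proof (rule ccontr)
    assume "\<not> ?thesis"
    then have "(cmod (w 1))^2 = 0" by simp
    then show False using le np by simp
  qed
  have "1 / (1 + \<epsilon>) = (cmod (w 1))^2 / ((1 + \<epsilon>) * (cmod (w 1))^2)" using X by simp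
  also have "\<dots> \<le> (cmod (w 1))^2 / sqnorm {1..n+1} w"
    by (rule frac_le) (use X np le in auto)
  finally show ?thesis unfolding coord_frac_def .
qed

lemma last_nonzero_coord:
  fixes v :: "nat \<Rightarrow> complex"
  assumes v: "v \<in> cvecs {1..n+1}" "v \<noteq> (\<lambda>i. 0)"
  obtains d where "d \<le> n" "v (d+1) \<noteq> 0" "\<forall>i. d+1 < i \<longrightarrow> v i = 0"
proof -
  define D where "D = Max {i\<in>{1..n+1}. v i \<noteq> 0}"
  have ne: "{i\<in>{1..n+1}. v i \<noteq> 0} \<noteq> {}" using v cvecs_out[OF v(1)] by auto
  have D: "D \<in> {1..n+1}" "v D \<noteq> 0" using Max_in[OF _ ne] unfolding D_def by auto
  have "v i = 0" if "D < i" for i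
  proof (rule ccontr)
    assume "v i \<noteq> 0"
    then have "i \<le> D" unfolding D_def using cvecs_out[OF v(1)] by (intro Max_ge) auto
    then show False using that by simp
  qed
  then show ?thesis using that[of "D - 1"] D by auto
qed

lemma coord_frac_1_jpow_uniform:
  assumes dn: "d \<le> n" and rho: "\<rho> > 0" and eps: "\<epsilon> > 0"
  shows "\<exists>N::real. \<forall>k::int. N \<le> real_of_int \<bar>k\<bar> \<longrightarrow> (\<forall>w. w \<in> cvecs {1..n+1} \<longrightarrow> w \<noteq> (\<lambda>i. 0) \<longrightarrow>
     (\<forall>i. d+1 < i \<longrightarrow> w i = 0) \<longrightarrow> \<rho> \<le> coord_frac {1..n+1} (d+1) w \<longrightarrow>
     1 / (1 + \<epsilon>) \<le> coord_frac {1..n+1} 1 (jpow n k w))"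
proof -
  have rho': "sqrt \<rho> > 0" using rho by simp
  obtain N where N: "\<forall>k::int. N \<le> real_of_int \<bar>k\<bar> \<longrightarrow> (\<forall>w. w \<in> cvecs {1..n+1} \<longrightarrow> (\<forall>i. d+1 < i \<longrightarrow> w i = 0) \<longrightarrow>
       (sqrt \<rho>)^2 * sqnorm {1..n+1} w \<le> (cmod (w (d+1)))^2 \<longrightarrow>
       (\<Sum>i\<in>{2..n+1}. (cmod (jpow n k w i))^2) \<le> \<epsilon> * (cmod (jpow n k w 1))^2)"
    using jpow_concentrates_first[OF dn rho' eps] by (elim exE)
  show ?thesis
  proof (intro exI[of _ N] allI impI)
    fix k :: int and w assume k: "N \<le> real_of_int \<bar>k\<bar>" and w: "w \<in> cvecs {1..n+1}" "w \<noteq> (\<lambda>i. 0)"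
      and supp: "\<forall>i. d+1 < i \<longrightarrow> w i = 0" and q: "\<rho> \<le> coord_frac {1..n+1} (d+1) w"
    have pos: "sqnorm {1..n+1} w > 0" using sqnorm_pos[OF _ w] by simp
    have "\<rho> * sqnorm {1..n+1} w \<le> coord_frac {1..n+1} (d+1) w * sqnorm {1..n+1} w"
      using q pos by (intro mult_right_mono) auto
    also have "\<dots> = (cmod (w (d+1)))^2" unfolding coord_frac_def using pos by simp
    finally have "(sqrt \<rho>)^2 * sqnorm {1..n+1} w \<le> (cmod (w (d+1)))^2" using rho by simp
    then have "(\<Sum>i\<in>{2..n+1}. (cmod (jpow n k w i))^2) \<le> \<epsilon> * (cmod (jpow n k w 1))^2"
      using N k w(1) supp by blast
    then show "1 / (1 + \<epsilon>) \<le> coord_frac {1..n+1} 1 (jpow n k w)"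
      by (rule coord_frac_1_lower[OF jpow_cvecs jpow_nonzero[OF w]])
  qed
qed

lemma coord_frac_1_jpow_eventually_ge:
  assumes v: "v \<in> cvecs {1..n+1}" "v \<noteq> (\<lambda>i. 0)" and eps: "\<epsilon> > 0"
  shows "\<exists>N::real. \<forall>k::int. N \<le> real_of_int \<bar>k\<bar> \<longrightarrow> 1 / (1 + \<epsilon>) \<le> coord_frac {1..n+1} 1 (jpow n k v)"
proof -
  obtain d where d: "d \<le> n" "v (d+1) \<noteq> 0" "\<forall>i. d+1 < i \<longrightarrow> v i = 0"
    using last_nonzero_coord[OF v] by blast
  define \<rho> where "\<rho> = coord_frac {1..n+1} (d+1) v"
  have rho: "\<rho> > 0" using d(2) sqnorm_pos[OF _ v] unfolding \<rho>_def coord_frac_def by simp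
  obtain N where N: "\<forall>k::int. N \<le> real_of_int \<bar>k\<bar> \<longrightarrow> (\<forall>w. w \<in> cvecs {1..n+1} \<longrightarrow> w \<noteq> (\<lambda>i. 0) \<longrightarrow>
     (\<forall>i. d+1 < i \<longrightarrow> w i = 0) \<longrightarrow> \<rho> \<le> coord_frac {1..n+1} (d+1) w \<longrightarrow>
     1 / (1 + \<epsilon>) \<le> coord_frac {1..n+1} 1 (jpow n k w))"
    using coord_frac_1_jpow_uniform[OF d(1) rho eps] by (elim exE)
  show ?thesis
  proof (intro exI[of _ N] allI impI)
    fix k :: int assume "N \<le> real_of_int \<bar>k\<bar>"
    then show "1 / (1 + \<epsilon>) \<le> coord_frac {1..n+1} 1 (jpow n k v)"
      using N v d(3) unfolding \<rho>_def by blast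
  qed
qed

section \<open>Hyperplanes\<close>

definition coord_hyperplane :: "nat \<Rightarrow> (nat \<Rightarrow> complex) set set" where
  "coord_hyperplane n = {pt v | v. v \<in> cvecs {1..n+1} \<and> v \<noteq> (\<lambda>i. 0) \<and> v (n+1) = 0}"

lemma pspan_e_eq_coord_hyperplane:
  fixes n :: nat
  shows "pspan {1..n+1} {pt (e k) | k. k \<in> {1..n}} = coord_hyperplane n"
proof -
  have cs: "v \<in> cspan (\<Union>{pt (e k) | k. k \<in> {1..n}}) \<longleftrightarrow> v (n+1) = 0" if v: "v \<in> cvecs {1..n+1}" for v
  proof
    assume "v \<in> cspan (\<Union>{pt (e k) | k. k \<in> {1..n}})"
    then obtain F c where F: "finite F" "F \<subseteq> \<Union>{pt (e k) | k. k \<in> {1..n}}" "v = (\<lambda>i. \<Sum>w\<in>F. c w * w i)"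
      unfolding cspan_def by auto
    have "w (n+1) = 0" if "w \<in> F" for w
    proof -
      obtain k d where "k \<in> {1..n}" "w = (\<lambda>i. d * e k i)" using F(2) \<open>w \<in> F\<close> unfolding pt_def by blast
      then show ?thesis unfolding e_def by auto
    qed
    then show "v (n+1) = 0" unfolding F(3) by (auto intro!: sum.neutral)
  next
    assume v0: "v (n+1) = 0"
    define F where "F = e ` {1..n}"
    define c where "c w = (\<Sum>j\<in>{1..n}. w j * v j)" for w :: "nat \<Rightarrow> complex"
    have inj: "inj_on e {1..n}" unfolding inj_on_def e_def by (metis zero_neq_one)
    have ce: "c (e k) = v k" if "k \<in> {1..n}" for k
    proof -
      have "c (e k) = (\<Sum>j\<in>{1..n}. if j = k then v j else 0)" unfolding c_def e_def
        by (rule sum.cong) auto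
      then show ?thesis using that by simp
    qed
    have "v = (\<lambda>i. \<Sum>w\<in>F. c w * w i)"
    proof
      fix i
      have "(\<Sum>w\<in>F. c w * w i) = (\<Sum>k\<in>{1..n}. c (e k) * e k i)" unfolding F_def using sum.reindex[OF inj, of "\<lambda>w. c w * w i"] by simp
      also have "\<dots> = (\<Sum>k\<in>{1..n}. v k * e k i)" by (rule sum.cong) (auto simp: ce)
      also have "\<dots> = (if i \<in> {1..n} then v i else 0)" unfolding e_def
        by (simp add: if_distrib sum.delta cong: if_cong)
      also have "\<dots> = v i" using v0 cvecs_out[OF v, of i] by (cases "i = n+1") auto
      finally show "v i = (\<Sum>w\<in>F. c w * w i)" ..
    qed
    moreover have "F \<subseteq> \<Union>{pt (e k) | k. k \<in> {1..n}}" unfolding F_def using pt_self by blast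
    ultimately show "v \<in> cspan (\<Union>{pt (e k) | k. k \<in> {1..n}})" unfolding cspan_def F_def by blast
  qed
  show ?thesis unfolding pspan_def coord_hyperplane_def using cs by blast
qed

lemma coord_hyperplane_pcoord_frac: "coord_hyperplane n = {p \<in> PS {1..n+1}. pcoord_frac {1..n+1} (n+1) p = 0}"
proof (intro equalityI subsetI)
  fix p assume "p \<in> coord_hyperplane n"
  then obtain v where v: "v \<in> cvecs {1..n+1}" "v \<noteq> (\<lambda>i. 0)" "v (n+1) = 0" "p = pt v" unfolding coord_hyperplane_def by auto
  then show "p \<in> {p \<in> PS {1..n+1}. pcoord_frac {1..n+1} (n+1) p = 0}" unfolding PS_iff
    using coord_frac_eq_0_iff[OF v(1,2)] by (auto simp: pcoord_frac_pt)
next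
  fix p assume "p \<in> {p \<in> PS {1..n+1}. pcoord_frac {1..n+1} (n+1) p = 0}"
  then obtain v where v: "v \<in> cvecs {1..n+1}" "v \<noteq> (\<lambda>i. 0)" "p = pt v" "coord_frac {1..n+1} (n+1) v = 0"
    unfolding PS_iff by (auto simp: pcoord_frac_pt)
  then show "p \<in> coord_hyperplane n" unfolding coord_hyperplane_def using coord_frac_eq_0_iff[OF v(1,2)] by auto
qed

lemma e1_in_coord_hyperplane: "n \<ge> 1 \<Longrightarrow> pt (e 1) \<in> coord_hyperplane n"
  unfolding coord_hyperplane_def using e_cvecs[of 1 "{1..n+1}"] e_nonzero[of 1] by (auto simp: e_def)

lemma coord_hyperplane_subset: "coord_hyperplane n \<subseteq> PS {1..n+1}"
proof
  fix x assume "x \<in> coord_hyperplane n"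
  then obtain v where v: "v \<in> cvecs {1..n+1}" "v \<noteq> (\<lambda>i. 0)" "x = pt v" unfolding coord_hyperplane_def by blast
  then show "x \<in> PS {1..n+1}" unfolding PS_iff by blast
qed

definition lform :: "nat \<Rightarrow> (nat \<Rightarrow> complex) \<Rightarrow> (nat \<Rightarrow> complex) \<Rightarrow> complex" where
  "lform n a v = (\<Sum>i\<in>{1..n+1}. a i * v i)"

lemma hyperplane_lform:
  "hyperplane {1..n+1} a = {pt v | v. v \<in> cvecs {1..n+1} \<and> v \<noteq> (\<lambda>i. 0) \<and> lform n a v = 0}"
proof -
  have "(\<forall>x\<in>pt v. lform n a x = 0) \<longleftrightarrow> lform n a v = 0" for v
  proof
    assume "\<forall>x\<in>pt v. lform n a x = 0" then show "lform n a v = 0" using pt_self by blast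
  next
    assume h: "lform n a v = 0"
    show "\<forall>x\<in>pt v. lform n a x = 0"
    proof
      fix x assume "x \<in> pt v"
      then obtain c where "x = (\<lambda>i. c * v i)" unfolding pt_def by auto
      then have "lform n a x = c * lform n a v" unfolding lform_def by (simp add: sum_distrib_left algebra_simps)
      then show "lform n a x = 0" using h by simp
    qed
  qed
  then show ?thesis unfolding hyperplane_def lform_def[symmetric] PS_iff by auto
qed

lemma norm_lform_le:
  fixes n :: nat
  assumes "\<forall>i\<in>{1..n+1}. cmod (x i) \<le> b"
  shows "cmod (lform n a x) \<le> (\<Sum>i\<in>{1..n+1}. cmod (a i)) * b"
proof -
  have "cmod (lform n a x) \<le> (\<Sum>i\<in>{1..n+1}. cmod (a i) * cmod (x i))" unfolding lform_def
    by (rule order_trans[OF norm_sum]) (simp add: norm_mult)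
  also have "\<dots> \<le> (\<Sum>i\<in>{1..n+1}. cmod (a i) * b)" by (rule sum_mono) (use assms in \<open>auto intro: mult_left_mono\<close>)
  also have "\<dots> = (\<Sum>i\<in>{1..n+1}. cmod (a i)) * b" by (rule sum_distrib_right[symmetric])
  finally show ?thesis .
qed

lemma lform_add: "lform n a (\<lambda>i. x i + y i) = lform n a x + lform n a y"
  unfolding lform_def by (simp add: algebra_simps sum.distrib)

lemma lform_scale: "lform n a (\<lambda>i. c * x i) = c * lform n a x"
  unfolding lform_def by (simp add: algebra_simps sum_distrib_left)

lemma lform_e: "k \<in> {1..n+1} \<Longrightarrow> lform n a (e k) = a k"
proof -
  assume k: "k \<in> {1..n+1}"
  have "lform n a (e k) = (\<Sum>i\<in>{1..n+1}. if i = k then a i else 0)" unfolding lform_def e_def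
    by (rule sum.cong) auto
  then show ?thesis using k by simp
qed

lemma lform_e1: "lform n (e 1) u = u 1"
proof -
  have "lform n (e 1) u = (\<Sum>i\<in>{1..n+1}. if i = 1 then u i else 0)" unfolding lform_def e_def
    by (rule sum.cong) auto
  then show ?thesis by simp
qed

lemma hyperplane_nonempty:
  fixes n :: nat
  assumes n: "n \<ge> 1" and a1: "a 1 \<noteq> 0"
  shows "hyperplane {1..n+1} a \<noteq> {}"
proof -
  define v where "v = (\<lambda>i. a 2 * e 1 i + (- a 1) * e 2 i)"
  have v: "v \<in> cvecs {1..n+1}" unfolding v_def e_def cvecs_def using n by auto
  have "v 2 = - a 1" unfolding v_def e_def by simp
  then have v0: "v \<noteq> (\<lambda>i. 0)" using a1 by (auto dest: fun_cong[of _ _ 2])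
  have "lform n a v = a 2 * a 1 + (- a 1) * a 2" unfolding v_def lform_add lform_scale
    using lform_e[of 1 n a] lform_e[of 2 n a] n by simp
  then have "lform n a v = 0" by simp
  then show ?thesis unfolding hyperplane_lform using v v0 by blast
qed

lemma e1_notin_hyperplane_e1: "pt (e 1) \<notin> hyperplane {1..n+1} (e 1)"
proof
  assume "pt (e 1) \<in> hyperplane {1..n+1} (e 1)"
  then obtain v where v: "pt (e 1) = pt v" "lform n (e 1) v = 0" unfolding hyperplane_lform by blast
  obtain c where c: "c \<noteq> 0" "e 1 = (\<lambda>i. c * v i)" using pt_eqD[OF v(1)] by blast
  have "1 = c * v 1" using fun_cong[OF c(2), of 1] unfolding e_def by simp
  moreover have "v 1 = 0" using v(2) unfolding lform_e1 .
  ultimately show False by simp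
qed

lemma iterates_hyperplane_eq:
  "(pmap {1..n+1} (jordan1 n) ^^ m) ` hyperplane {1..n+1} a
     = {pt (jpow n (int m) v) | v. v \<in> cvecs {1..n+1} \<and> v \<noteq> (\<lambda>i. 0) \<and> lform n a v = 0}"
  unfolding hyperplane_lform using pmap_jordan1_pow_pt by blast

lemma iterates_hyperplane_subset: "(pmap {1..n+1} (jordan1 n) ^^ m) ` hyperplane {1..n+1} a \<subseteq> PS {1..n+1}"
proof
  fix x assume "x \<in> (pmap {1..n+1} (jordan1 n) ^^ m) ` hyperplane {1..n+1} a"
  then obtain v where v: "v \<in> cvecs {1..n+1}" "v \<noteq> (\<lambda>i. 0)" "x = pt (jpow n (int m) v)"
    unfolding iterates_hyperplane_eq by blast
  then show "x \<in> PS {1..n+1}" unfolding PS_iff using jpow_cvecs jpow_nonzero[OF v(1,2)] by blast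
qed

section \<open>Convergence of the iterated hyperplanes\<close>

lemma hyperplane_coord_frac_1_le:
  assumes a1: "a 1 \<noteq> 0" and v: "v \<in> cvecs {1..n+1}" "v \<noteq> (\<lambda>i. 0)" and va: "lform n a v = 0"
  defines "C \<equiv> ((\<Sum>i\<in>{1..n+1}. cmod (a i)) / cmod (a 1))^2"
  shows "coord_frac {1..n+1} 1 v \<le> C / (1 + C)"
proof -
  define A where "A = (\<Sum>i\<in>{1..n+1}. cmod (a i))"
  define S where "S = (\<Sum>i\<in>{2..n+1}. (cmod (v i))^2)"
  have S0: "S \<ge> 0" unfolding S_def by (simp add: sum_nonneg)
  have vi: "cmod (v i) \<le> sqrt S" if i: "i \<in> {2..n+1}" for i
    using member_le_sum[OF i, of "\<lambda>i. (cmod (v i))^2"] real_le_rsqrt unfolding S_def by simp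
  have "cmod (a 1) * cmod (v 1) = cmod (\<Sum>i\<in>{2..n+1}. a i * v i)"
  proof -
    have "lform n a v = a 1 * v 1 + (\<Sum>i\<in>{2..n+1}. a i * v i)"
      unfolding lform_def by (subst sum.atLeast_Suc_atMost) (auto simp: numeral_2_eq_2)
    then show ?thesis using va by (metis add_eq_0_iff norm_minus_cancel norm_mult)
  qed
  also have "\<dots> \<le> (\<Sum>i\<in>{2..n+1}. cmod (a i) * sqrt S)"
    by (rule order_trans[OF norm_sum sum_mono]) (auto simp: norm_mult intro!: mult_left_mono vi)
  also have "\<dots> \<le> A * sqrt S" unfolding A_def sum_distrib_right[symmetric]
    using S0 by (intro mult_right_mono sum_mono2) auto
  finally have "cmod (v 1) \<le> A / cmod (a 1) * sqrt S" using a1 by (simp add: field_simps)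
  then have "(cmod (v 1))^2 \<le> (A / cmod (a 1) * sqrt S)^2" by (rule power_mono) simp
  also have "(A / cmod (a 1) * sqrt S)^2 = C * S" unfolding C_def A_def using S0 by (simp add: power_mult_distrib power_divide)
  finally have v1: "(cmod (v 1))^2 \<le> C * S" .
  have sq: "sqnorm {1..n+1} v = (cmod (v 1))^2 + S"
    unfolding sqnorm_def S_def by (subst sum.atLeast_Suc_atMost) (auto simp: numeral_2_eq_2)
  have pos: "sqnorm {1..n+1} v > 0" using sqnorm_pos[OF _ v] by simp
  have C0: "C \<ge> 0" unfolding C_def by simp
  have "(cmod (v 1))^2 * (1 + C) \<le> C * ((cmod (v 1))^2 + S)" using v1 by (simp add: algebra_simps)
  then show ?thesis unfolding coord_frac_def sq using pos C0 sq by (simp add: field_simps)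
qed

text \<open>If J^m v had a large last coordinate, then v = J^-m (J^m v) would be almost [e_1]
  (coord_frac_1_jpow_uniform), which the hyperplane forbids since a_1 \<noteq> 0.\<close>
lemma iterates_last_coord_small:
  assumes a1: "a 1 \<noteq> 0" and rho: "\<rho> > 0"
  shows "\<exists>N::nat. \<forall>m\<ge>N. \<forall>v. v \<in> cvecs {1..n+1} \<longrightarrow> v \<noteq> (\<lambda>i. 0) \<longrightarrow> lform n a v = 0 \<longrightarrow>
     coord_frac {1..n+1} (n+1) (jpow n (int m) v) < \<rho>"
proof -
  define C where "C = ((\<Sum>i\<in>{1..n+1}. cmod (a i)) / cmod (a 1))^2"
  have "cmod (a 1) \<le> (\<Sum>i\<in>{1..n+1}. cmod (a i))" by (rule member_le_sum) auto
  then have C1: "C \<ge> 1" unfolding C_def using a1 by simp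
  define \<epsilon> where "\<epsilon> = 1 / (2 * C)"
  have eps: "\<epsilon> > 0" unfolding \<epsilon>_def using C1 by simp
  have gap: "C / (1 + C) < 1 / (1 + \<epsilon>)" unfolding \<epsilon>_def using C1 by (simp add: field_simps)
  obtain N where N: "\<forall>k::int. N \<le> real_of_int \<bar>k\<bar> \<longrightarrow> (\<forall>w. w \<in> cvecs {1..n+1} \<longrightarrow> w \<noteq> (\<lambda>i. 0) \<longrightarrow>
     (\<forall>i. n+1 < i \<longrightarrow> w i = 0) \<longrightarrow> \<rho> \<le> coord_frac {1..n+1} (n+1) w \<longrightarrow>
     1 / (1 + \<epsilon>) \<le> coord_frac {1..n+1} 1 (jpow n k w))"
    using coord_frac_1_jpow_uniform[OF order_refl rho eps, of n] by (elim exE)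
  show ?thesis
  proof (intro exI[of _ "nat \<lceil>N\<rceil>"] allI impI)
    fix m v assume m: "nat \<lceil>N\<rceil> \<le> m" and v: "v \<in> cvecs {1..n+1}" "v \<noteq> (\<lambda>i. 0)" "lform n a v = 0"
    define w where "w = jpow n (int m) v"
    have w: "w \<in> cvecs {1..n+1}" "w \<noteq> (\<lambda>i. 0)" "\<forall>i. n+1 < i \<longrightarrow> w i = 0"
      unfolding w_def using jpow_cvecs jpow_nonzero[OF v(1,2)] jpow_outside by auto
    have kN: "N \<le> real_of_int \<bar>- int m\<bar>" using m by linarith
    have wv: "jpow n (- int m) w = v" unfolding w_def by (rule jpow_neg_cancel[OF v(1)])
    show "coord_frac {1..n+1} (n+1) w < \<rho>"
    proof (rule ccontr)
      assume "\<not> ?thesis"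
      then have "1 / (1 + \<epsilon>) \<le> coord_frac {1..n+1} 1 (jpow n (- int m) w)" using N kN w by simp
      then show False
        using hyperplane_coord_frac_1_le[OF a1 v] gap unfolding wv C_def by linarith
    qed
  qed
qed

lemma pdist_drop_last_coord:
  fixes w :: "nat \<Rightarrow> complex"
  assumes w: "w \<in> cvecs {1..n+1}" "w \<noteq> (\<lambda>i. 0)"
    and small: "coord_frac {1..n+1} (n+1) w < \<rho>^2" and rho: "0 \<le> \<rho>" "\<rho> \<le> 1/2"
  defines "w' \<equiv> (\<lambda>i. if i = n+1 then 0 else w i)"
  shows "pt w' \<in> coord_hyperplane n" and "pdist {1..n+1} (pt w) (pt w') \<le> 4 * \<rho>"
proof -
  have npos: "sqnorm {1..n+1} w > 0" using sqnorm_pos[OF _ w] by simp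
  have wlt: "(cmod (w (n+1)))^2 < \<rho>^2 * sqnorm {1..n+1} w"
    using small npos unfolding coord_frac_def by (simp add: divide_less_eq)
  have w'c: "w' \<in> cvecs {1..n+1}" using w(1) unfolding w'_def cvecs_def by auto
  have nsplit: "sqnorm {1..n+1} w = sqnorm {1..n+1} w' + (cmod (w (n+1)))^2"
  proof -
    have "sqnorm {1..n+1} w = (cmod (w (n+1)))^2 + (\<Sum>i\<in>{1..n+1} - {n+1}. (cmod (w i))^2)"
      unfolding sqnorm_def by (subst sum.remove[of _ "n+1"]) auto
    moreover have "sqnorm {1..n+1} w' = 0 + (\<Sum>i\<in>{1..n+1} - {n+1}. (cmod (w i))^2)"
      unfolding sqnorm_def w'_def by (subst sum.remove[of _ "n+1"]) (auto intro!: sum.cong)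
    ultimately show ?thesis by simp
  qed
  have "\<rho>^2 \<le> (1/2)^2" using rho by (intro power_mono) auto
  then have "\<rho>^2 * sqnorm {1..n+1} w \<le> sqnorm {1..n+1} w / 4" using npos by (simp add: power2_eq_square)
  then have w'pos: "sqnorm {1..n+1} w' > 0" using nsplit wlt npos by linarith
  then have "w' \<noteq> (\<lambda>i. 0)" unfolding sqnorm_def by auto
  then show "pt w' \<in> coord_hyperplane n" unfolding coord_hyperplane_def using w'c by (auto simp: w'_def)
  have diff: "vnorm {1..n+1} (\<lambda>i. w i - w' i) = cmod (w (n+1))"
  proof -
    have "sqnorm {1..n+1} (\<lambda>i. w i - w' i) = (\<Sum>i\<in>{1..n+1}. if i = n+1 then (cmod (w (n+1)))^2 else 0)"
      unfolding sqnorm_def w'_def by (rule sum.cong) auto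
    then show ?thesis unfolding vnorm_def by simp
  qed
  have lt: "cmod (w (n+1)) < \<rho> * vnorm {1..n+1} w"
  proof -
    have "sqrt ((cmod (w (n+1)))^2) < sqrt (\<rho>^2 * sqnorm {1..n+1} w)" using wlt by (rule real_sqrt_less_mono)
    then show ?thesis using rho unfolding vnorm_def by (simp add: real_sqrt_mult)
  qed
  have "pdist {1..n+1} (pt w) (pt w') \<le> 4 * vnorm {1..n+1} (\<lambda>i. w i - w' i) / vnorm {1..n+1} w"
    unfolding pdist_pt by (rule line_dist_le) (use npos w'pos in auto)
  also have "\<dots> \<le> 4 * \<rho>" unfolding diff using lt npos unfolding vnorm_def by (simp add: divide_le_eq)
  finally show "pdist {1..n+1} (pt w) (pt w') \<le> 4 * \<rho>" .
qed

lemma iterates_near_coord_hyperplane: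
  assumes a1: "a 1 \<noteq> 0" and d: "\<delta> > 0"
  shows "\<exists>N::nat. \<forall>m\<ge>N. \<forall>x\<in>(pmap {1..n+1} (jordan1 n) ^^ m) ` hyperplane {1..n+1} a.
            \<exists>y\<in>coord_hyperplane n. pdist {1..n+1} x y \<le> \<delta>"
proof -
  define \<rho> where "\<rho> = min (1/2) (\<delta>/4)"
  have rho: "\<rho> > 0" "\<rho> \<le> 1/2" "4 * \<rho> \<le> \<delta>" unfolding \<rho>_def using d by auto
  obtain N where N: "\<forall>m\<ge>N. \<forall>v. v \<in> cvecs {1..n+1} \<longrightarrow> v \<noteq> (\<lambda>i. 0) \<longrightarrow> lform n a v = 0 \<longrightarrow>
     coord_frac {1..n+1} (n+1) (jpow n (int m) v) < \<rho>^2"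
    using iterates_last_coord_small[where a=a, OF a1, of "\<rho>^2"] rho(1) by auto
  show ?thesis
  proof (intro exI[of _ N] allI impI ballI)
    fix m x assume m: "N \<le> m" and "x \<in> (pmap {1..n+1} (jordan1 n) ^^ m) ` hyperplane {1..n+1} a"
    then obtain v where v: "v \<in> cvecs {1..n+1}" "v \<noteq> (\<lambda>i. 0)" "lform n a v = 0" "x = pt (jpow n (int m) v)"
      unfolding iterates_hyperplane_eq by blast
    have "coord_frac {1..n+1} (n+1) (jpow n (int m) v) < \<rho>^2" using N m v by blast
    from pdist_drop_last_coord[OF jpow_cvecs jpow_nonzero[OF v(1,2)] this _ rho(2)]
    show "\<exists>y\<in>coord_hyperplane n. pdist {1..n+1} x y \<le> \<delta>"
      using rho v(4) by force
  qed
qed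

text \<open>For u with u_{n+1} = 0, lift_vec n a m u is the preimage under J^m of u + s e_{n+1}, with
  s = lift_coeff n a m u chosen to put it on the hyperplane a; the lower-order binomials in
  J^-m u are dominated by binom(-m, n) in the first coordinate of J^-m e_{n+1}, so s \<rightarrow> 0.\<close>
definition lift_coeff :: "nat \<Rightarrow> (nat \<Rightarrow> complex) \<Rightarrow> nat \<Rightarrow> (nat \<Rightarrow> complex) \<Rightarrow> complex" where
  "lift_coeff n a m u = - lform n a (jpow n (- int m) u) / lform n a (jpow n (- int m) (e (n+1)))"

definition lift_vec :: "nat \<Rightarrow> (nat \<Rightarrow> complex) \<Rightarrow> nat \<Rightarrow> (nat \<Rightarrow> complex) \<Rightarrow> (nat \<Rightarrow> complex)" where
  "lift_vec n a m u = jpow n (- int m) (\<lambda>i. u i + lift_coeff n a m u * e (n+1) i)"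

lemma norm_lform_jpow_last_ge:
  assumes n: "n \<ge> 1"
  shows "cmod (a 1) * cmod (of_int k gchoose n :: complex)
           - (\<Sum>i\<in>{1..n+1}. cmod (a i)) * (\<Sum>r<n. cmod (of_int k gchoose r :: complex))
         \<le> cmod (lform n a (jpow n k (e (n+1))))"
proof -
  define A where "A = (\<Sum>i\<in>{1..n+1}. cmod (a i))"
  define B where "B = (\<Sum>r<n. cmod (of_int k gchoose r :: complex))"
  define E where "E = jpow n k (e (n+1))"
  have e: "\<forall>j. n+1 < j \<longrightarrow> e (n+1) j = 0" "\<forall>j. cmod (e (n+1) j) \<le> 1"
    unfolding e_def by auto
  have E1: "E 1 = of_int k gchoose n"
    unfolding E_def jpow_first_coord[OF e(1) order_refl] by (simp add: e_def)
  have Ei: "cmod (E i) \<le> B" if "i \<in> {2..n+1}" for i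
    using norm_jpow_le[OF e, where c=n and n=n and i=i and k=k] that unfolding E_def B_def by simp
  have split: "lform n a E = a 1 * E 1 + (\<Sum>i\<in>{2..n+1}. a i * E i)"
    unfolding lform_def by (subst sum.atLeast_Suc_atMost) (auto simp: numeral_2_eq_2)
  have "cmod (\<Sum>i\<in>{2..n+1}. a i * E i) \<le> (\<Sum>i\<in>{2..n+1}. cmod (a i) * B)"
    by (rule order_trans[OF norm_sum sum_mono]) (auto simp: norm_mult intro!: mult_left_mono Ei)
  also have "\<dots> \<le> A * B" unfolding A_def sum_distrib_right[symmetric] B_def
    by (intro mult_right_mono sum_mono2) (auto intro: sum_nonneg)
  finally have "cmod (\<Sum>i\<in>{2..n+1}. a i * E i) \<le> A * B" .
  moreover have "cmod (a 1 * E 1) - cmod (\<Sum>i\<in>{2..n+1}. a i * E i) \<le> cmod (lform n a E)"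
    unfolding split using norm_triangle_ineq2[of "a 1 * E 1" "- (\<Sum>i\<in>{2..n+1}. a i * E i)"] by simp
  ultimately have "cmod (a 1) * cmod (E 1) - A * B \<le> cmod (lform n a E)" by (simp add: norm_mult)
  then show ?thesis unfolding E1 unfolding A_def B_def E_def .
qed

lemma lift_coeff_small:
  fixes n :: nat
  assumes n: "n \<ge> 1" and a1: "a 1 \<noteq> 0" and eps: "\<epsilon> > 0"
  shows "\<exists>N::nat. \<forall>m\<ge>N. \<forall>u. u \<in> cvecs {1..n+1} \<longrightarrow> u (n+1) = 0 \<longrightarrow> sqnorm {1..n+1} u = 1 \<longrightarrow>
     lform n a (jpow n (- int m) (e (n+1))) \<noteq> 0 \<and> cmod (lift_coeff n a m u) \<le> \<epsilon>"
proof -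
  define A where "A = (\<Sum>i\<in>{1..n+1}. cmod (a i))"
  have A1: "cmod (a 1) \<le> A" unfolding A_def by (rule member_le_sum) auto
  have Apos: "A > 0" using A1 a1 by (meson order_less_le_trans zero_less_norm_iff)
  obtain N0 where N0: "\<forall>k::int. N0 \<le> real_of_int \<bar>k\<bar> \<longrightarrow>
        (A * (1 + 1/\<epsilon>)) * (\<Sum>r<n. cmod (of_int k gchoose r :: complex)) \<le> cmod (a 1) * cmod (of_int k gchoose n :: complex)"
    using gbinomial_dominates_lower[OF n order_refl, of "cmod (a 1)" "A * (1 + 1/\<epsilon>)"] a1 by auto
  show ?thesis
  proof (intro exI[of _ "nat \<lceil>N0\<rceil>"] allI impI conjI)
    fix m u assume m: "nat \<lceil>N0\<rceil> \<le> m" and u: "u \<in> cvecs {1..n+1}" "u (n+1) = 0" "sqnorm {1..n+1} u = 1"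
    define k where "k = - int m"
    define B where "B = (\<Sum>r<n. cmod (of_int k gchoose r :: complex))"
    have B1: "B \<ge> 1" unfolding B_def using n by (subst sum.remove[of _ 0]) (auto intro: sum_nonneg)
    have dom: "(A * (1 + 1/\<epsilon>)) * B \<le> cmod (a 1) * cmod (of_int k gchoose n :: complex)"
    proof -
      have "N0 \<le> real_of_int \<bar>k\<bar>" using m unfolding k_def by linarith
      then show ?thesis using N0 unfolding B_def by blast
    qed
    have us: "\<forall>j. cmod (u j) \<le> 1" using norm_coord_le_sqnorm[OF u(1)] u(3) by simp
    have usupp: "\<forall>j. n < j \<longrightarrow> u j = 0"
    proof (intro allI impI)
      fix j assume "n < j"
      then have "j = n+1 \<or> j \<notin> {1..n+1}" by auto
      then show "u j = 0" using u(2) cvecs_out[OF u(1)] by auto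
    qed
    have num: "cmod (lform n a (jpow n k u)) \<le> A * B"
    proof -
      have "\<forall>i\<in>{1..n+1}. cmod (jpow n k u i) \<le> B * 1"
        unfolding B_def using norm_jpow_le[OF usupp us, of n] by auto
      then show ?thesis using norm_lform_le[of n "jpow n k u" "B * 1" a] unfolding A_def by simp
    qed
    have den: "A * B / \<epsilon> \<le> cmod (lform n a (jpow n k (e (n+1))))"
    proof -
      have "(A * (1 + 1/\<epsilon>)) * B = A * B + A * B / \<epsilon>" using eps by (simp add: field_simps)
      then show ?thesis using norm_lform_jpow_last_ge[OF n, of a k] dom unfolding A_def B_def by linarith
    qed
    have pos: "A * B / \<epsilon> > 0" using Apos B1 eps by simp
    then show "lform n a (jpow n (- int m) (e (n+1))) \<noteq> 0" using den unfolding k_def by auto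
    have "cmod (lift_coeff n a m u) = cmod (lform n a (jpow n k u)) / cmod (lform n a (jpow n k (e (n+1))))"
      unfolding lift_coeff_def k_def by (simp add: norm_divide)
    also have "\<dots> \<le> (A * B) / (A * B / \<epsilon>)"
      using num den pos Apos B1 by (intro frac_le) auto
    also have "\<dots> = \<epsilon>" using Apos B1 eps by simp
    finally show "cmod (lift_coeff n a m u) \<le> \<epsilon>" .
  qed
qed

lemma lift_vec_props:
  assumes u: "u \<in> cvecs {1..n+1}" "u (n+1) = 0" "sqnorm {1..n+1} u = 1"
    and den: "lform n a (jpow n (- int m) (e (n+1))) \<noteq> 0"
  shows "lift_vec n a m u \<in> cvecs {1..n+1}" "lift_vec n a m u \<noteq> (\<lambda>i. 0)" "lform n a (lift_vec n a m u) = 0"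
    "pdist {1..n+1} (pt (jpow n (int m) (lift_vec n a m u))) (pt u) \<le> 4 * cmod (lift_coeff n a m u)"
proof -
  define s where "s = lift_coeff n a m u"
  define z where "z = (\<lambda>i. u i + s * e (n+1) i)"
  have ec: "e (n+1) \<in> cvecs {1..n+1}" by (rule e_cvecs) simp
  have zc: "z \<in> cvecs {1..n+1}" unfolding z_def using u(1) ec unfolding cvecs_def by auto
  have u0: "u \<noteq> (\<lambda>i. 0)" using u(3) unfolding sqnorm_def by auto
  then obtain j where j: "u j \<noteq> 0" by auto
  then have "j \<noteq> n+1" using u(2) by auto
  then have "z j = u j" unfolding z_def e_def by simp
  then have z0: "z \<noteq> (\<lambda>i. 0)" using j by auto
  have vvz: "lift_vec n a m u = jpow n (- int m) z" unfolding lift_vec_def z_def s_def ..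
  show "lift_vec n a m u \<in> cvecs {1..n+1}" unfolding vvz by (rule jpow_cvecs)
  show "lift_vec n a m u \<noteq> (\<lambda>i. 0)" unfolding vvz by (rule jpow_nonzero[OF zc z0])
  have "lform n a (lift_vec n a m u) = lform n a (jpow n (- int m) u) + s * lform n a (jpow n (- int m) (e (n+1)))"
    unfolding vvz z_def jpow_add_vec jpow_scale lform_add lform_scale ..
  also have "\<dots> = 0" unfolding s_def lift_coeff_def using den by simp
  finally show "lform n a (lift_vec n a m u) = 0" .
  have Tz: "jpow n (int m) (lift_vec n a m u) = z" unfolding vvz using jpow_jpow[OF zc, of "int m" "- int m"] jpow_0[OF zc] by simp
  have nz: "sqnorm {1..n+1} z > 0" using sqnorm_pos[OF _ zc z0] by simp
  have "pdist {1..n+1} (pt (jpow n (int m) (lift_vec n a m u))) (pt u) = line_dist {1..n+1} u z"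
    unfolding Tz pdist_pt line_dist_sym[of _ z] ..
  also have "\<dots> \<le> 4 * vnorm {1..n+1} (\<lambda>i. u i - z i) / vnorm {1..n+1} u"
    by (rule line_dist_le) (use nz u(3) in auto)
  also have "vnorm {1..n+1} (\<lambda>i. u i - z i) = cmod s"
  proof -
    have "(\<lambda>i. u i - z i) = (\<lambda>i. (- s) * e (n+1) i)" unfolding z_def by auto
    then show ?thesis using vnorm_scale[of _ "- s" "e (n+1)"] vnorm_e[of "n+1" n] by simp
  qed
  also have "vnorm {1..n+1} u = 1" unfolding vnorm_def u(3) by simp
  finally show "pdist {1..n+1} (pt (jpow n (int m) (lift_vec n a m u))) (pt u) \<le> 4 * cmod (lift_coeff n a m u)"
    unfolding s_def by simp
qed

lemma coord_hyperplane_unit_rep: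
  assumes "y \<in> coord_hyperplane n"
  obtains u where "u \<in> cvecs {1..n+1}" "u (n+1) = 0" "sqnorm {1..n+1} u = 1" "y = pt u"
proof -
  obtain v where v: "v \<in> cvecs {1..n+1}" "v \<noteq> (\<lambda>i. 0)" "v (n+1) = 0" "y = pt v"
    using assms unfolding coord_hyperplane_def by blast
  obtain u c where u: "u \<in> cvecs {1..n+1}" "sqnorm {1..n+1} u = 1" "pt u = pt v" "u = (\<lambda>i. c * v i)"
    using normalize_vec[OF v(1,2)] by blast
  show ?thesis using that[OF u(1) _ u(2)] u(3,4) v(3,4) by simp
qed

lemma lift_vec_near:
  assumes n: "n \<ge> 1" and a1: "a 1 \<noteq> 0" and d: "\<delta> > 0"
  shows "\<exists>N::nat. \<forall>m\<ge>N. \<forall>u. u \<in> cvecs {1..n+1} \<longrightarrow> u (n+1) = 0 \<longrightarrow> sqnorm {1..n+1} u = 1 \<longrightarrow>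
     lift_vec n a m u \<in> cvecs {1..n+1} \<and> lift_vec n a m u \<noteq> (\<lambda>i. 0) \<and> lform n a (lift_vec n a m u) = 0 \<and>
     pdist {1..n+1} (pt (jpow n (int m) (lift_vec n a m u))) (pt u) \<le> \<delta>"
proof -
  obtain N where N: "\<forall>m\<ge>N. \<forall>u. u \<in> cvecs {1..n+1} \<longrightarrow> u (n+1) = 0 \<longrightarrow> sqnorm {1..n+1} u = 1 \<longrightarrow>
     lform n a (jpow n (- int m) (e (n+1))) \<noteq> 0 \<and> cmod (lift_coeff n a m u) \<le> \<delta>/4"
    using lift_coeff_small[where a=a, OF n a1, of "\<delta>/4"] d by auto
  show ?thesis
  proof (intro exI[of _ N] allI impI)
    fix m u assume m: "N \<le> m" and u: "u \<in> cvecs {1..n+1}" "u (n+1) = 0" "sqnorm {1..n+1} u = 1"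
    then have est: "lform n a (jpow n (- int m) (e (n+1))) \<noteq> 0" "cmod (lift_coeff n a m u) \<le> \<delta>/4"
      using N by auto
    show "lift_vec n a m u \<in> cvecs {1..n+1} \<and> lift_vec n a m u \<noteq> (\<lambda>i. 0) \<and> lform n a (lift_vec n a m u) = 0 \<and>
        pdist {1..n+1} (pt (jpow n (int m) (lift_vec n a m u))) (pt u) \<le> \<delta>"
      using lift_vec_props[OF u est(1)] est(2) by simp
  qed
qed

lemma coord_hyperplane_near_iterates:
  assumes n: "n \<ge> 1" and a1: "a 1 \<noteq> 0" and d: "\<delta> > 0"
  shows "\<exists>N::nat. \<forall>m\<ge>N. \<forall>y\<in>coord_hyperplane n. \<exists>x\<in>(pmap {1..n+1} (jordan1 n) ^^ m) ` hyperplane {1..n+1} a.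
            pdist {1..n+1} x y \<le> \<delta>"
proof -
  obtain N where N: "\<forall>m\<ge>N. \<forall>u. u \<in> cvecs {1..n+1} \<longrightarrow> u (n+1) = 0 \<longrightarrow> sqnorm {1..n+1} u = 1 \<longrightarrow>
     lift_vec n a m u \<in> cvecs {1..n+1} \<and> lift_vec n a m u \<noteq> (\<lambda>i. 0) \<and> lform n a (lift_vec n a m u) = 0 \<and>
     pdist {1..n+1} (pt (jpow n (int m) (lift_vec n a m u))) (pt u) \<le> \<delta>"
    using lift_vec_near[where a=a, OF n a1 d] by blast
  show ?thesis
  proof (intro exI[of _ N] allI impI ballI)
    fix m y assume m: "N \<le> m" and y: "y \<in> coord_hyperplane n"
    obtain u where u: "u \<in> cvecs {1..n+1}" "u (n+1) = 0" "sqnorm {1..n+1} u = 1" "y = pt u"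
      using coord_hyperplane_unit_rep[OF y] by blast
    then show "\<exists>x\<in>(pmap {1..n+1} (jordan1 n) ^^ m) ` hyperplane {1..n+1} a. pdist {1..n+1} x y \<le> \<delta>"
      using N m unfolding iterates_hyperplane_eq by blast
  qed
qed

lemma hdist_iterates_tendsto:
  fixes n :: nat
  assumes n: "n \<ge> 1" and a1: "a 1 \<noteq> 0"
  shows "(\<lambda>m. hdist {1..n+1} ((pmap {1..n+1} (jordan1 n) ^^ m) ` hyperplane {1..n+1} a) (coord_hyperplane n)) \<longlonglongrightarrow> 0"
proof (rule LIMSEQ_I)
  fix r :: real assume r: "r > 0"
  obtain N1 where N1: "\<forall>m\<ge>N1. \<forall>x\<in>(pmap {1..n+1} (jordan1 n) ^^ m) ` hyperplane {1..n+1} a.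
            \<exists>y\<in>coord_hyperplane n. pdist {1..n+1} x y \<le> r/2"
    using iterates_near_coord_hyperplane[where a=a and n=n, OF a1, of "r/2"] r by auto
  obtain N2 where N2: "\<forall>m\<ge>N2. \<forall>y\<in>coord_hyperplane n. \<exists>x\<in>(pmap {1..n+1} (jordan1 n) ^^ m) ` hyperplane {1..n+1} a.
            pdist {1..n+1} x y \<le> r/2"
    using coord_hyperplane_near_iterates[where a=a, OF n a1, of "r/2"] r by auto
  show "\<exists>no. \<forall>m\<ge>no. norm (hdist {1..n+1} ((pmap {1..n+1} (jordan1 n) ^^ m) ` hyperplane {1..n+1} a) (coord_hyperplane n) - 0) < r"
  proof (intro exI[of _ "max N1 N2"] allI impI)
    fix m assume m: "max N1 N2 \<le> m"
    have "0 \<le> hdist {1..n+1} ((pmap {1..n+1} (jordan1 n) ^^ m) ` hyperplane {1..n+1} a) (coord_hyperplane n) \<and>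
        hdist {1..n+1} ((pmap {1..n+1} (jordan1 n) ^^ m) ` hyperplane {1..n+1} a) (coord_hyperplane n) \<le> r/2"
    proof (rule hdist_le)
      show "(pmap {1..n+1} (jordan1 n) ^^ m) ` hyperplane {1..n+1} a \<noteq> {}" using hyperplane_nonempty[where a=a, OF n a1] by simp
      show "coord_hyperplane n \<noteq> {}" using e1_in_coord_hyperplane[OF n] by blast
    qed (use N1 N2 m iterates_hyperplane_subset coord_hyperplane_subset in auto)
    then show "norm (hdist {1..n+1} ((pmap {1..n+1} (jordan1 n) ^^ m) ` hyperplane {1..n+1} a) (coord_hyperplane n) - 0) < r"
      using r by simp
  qed
qed

section \<open>The Kulkarni limit set\<close>

abbreviation PSn :: "nat \<Rightarrow> (nat \<Rightarrow> complex) set set" where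
  "PSn n \<equiv> PS {1..n+1}"

abbreviation pdn :: "nat \<Rightarrow> (nat \<Rightarrow> complex) set \<Rightarrow> (nat \<Rightarrow> complex) set \<Rightarrow> real" where
  "pdn n \<equiv> pdist {1..n+1}"

abbreviation gamma_grp :: "nat \<Rightarrow> ((nat \<Rightarrow> complex) set \<Rightarrow> (nat \<Rightarrow> complex) set) set" where
  "gamma_grp n \<equiv> cyclic (PS {1..n+1}) (pmap {1..n+1} (jordan1 n))"

lemma e1_in_LimLambda:
  fixes n :: nat
  assumes n: "n \<ge> 1"
  shows "pt (e 1) \<in> LimLambda (PSn n) (pdn n) (gamma_grp n)"
proof -
  have e1: "e 1 \<in> cvecs {1..n+1}" by (rule e_cvecs) simp
  have P: "pt (e 1) \<in> PSn n" unfolding PS_iff using e1 e_nonzero by blast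
  have inj: "inj (\<lambda>m::nat. gamma_pow n (int m))" using inj_compose[OF inj_gamma_pow[OF n] inj_of_nat] by (simp add: comp_def)
  have mem: "\<forall>m. gamma_pow n (int m) \<in> gamma_grp n" unfolding cyclic_jordan1_eq by auto
  have "gamma_pow n (int m) (pt (e 1)) = pt (e 1)" for m using gamma_pow_pt[OF e1 e_nonzero] jpow_e1 by simp
  then have "mconv (pdn n) (\<lambda>m. gamma_pow n (int m) (pt (e 1))) (pt (e 1))"
    unfolding mconv_def using pdist_self[OF P] by simp
  then have "pt (e 1) \<in> {y \<in> PSn n. \<exists>z\<in>PSn n. \<exists>g. inj g \<and> (\<forall>m. g m \<in> gamma_grp n) \<and> mconv (pdn n) (\<lambda>m. g m z) y}"
    using P inj mem by (intro CollectI conjI bexI[of _ "pt (e 1)"] exI[of _ "\<lambda>m. gamma_pow n (int m)"])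
  moreover have "{y \<in> PSn n. \<exists>z\<in>PSn n. \<exists>g. inj g \<and> (\<forall>m. g m \<in> gamma_grp n) \<and> mconv (pdn n) (\<lambda>m. g m z) y} \<subseteq> PSn n"
    by (rule subsetI, erule CollectE, erule conjunct1)
  ultimately show ?thesis unfolding LimLambda_def by (meson mclos_superset subsetD)
qed

lemma orbit_limits_subset:
  fixes n :: nat
  assumes n: "n \<ge> 1"
  shows "{y \<in> PSn n. \<exists>z\<in>PSn n. \<exists>g. inj g \<and> (\<forall>m. g m \<in> gamma_grp n) \<and> mconv (pdn n) (\<lambda>m. g m z) y}
     \<subseteq> {p \<in> PSn n. pcoord_frac {1..n+1} 1 p = 1}"
proof
  fix y assume "y \<in> {y \<in> PSn n. \<exists>z\<in>PSn n. \<exists>g. inj g \<and> (\<forall>m. g m \<in> gamma_grp n) \<and> mconv (pdn n) (\<lambda>m. g m z) y}"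
  then obtain z g where y: "y \<in> PSn n" and z: "z \<in> PSn n" and g: "inj g" "\<forall>m. g m \<in> gamma_grp n"
    and conv: "mconv (pdn n) (\<lambda>m. g m z) y" by blast
  obtain \<kappa> where \<kappa>: "inj \<kappa>" "\<forall>m. g m = gamma_pow n (\<kappa> m)" using cyclic_jordan1_seq[OF n g] by blast
  obtain v where v: "v \<in> cvecs {1..n+1}" "v \<noteq> (\<lambda>i. 0)" "z = pt v" using z unfolding PS_iff by blast
  have gz: "g m z = pt (jpow n (\<kappa> m) v)" for m using \<kappa>(2) gamma_pow_pt[OF v(1,2)] v(3) by simp
  have gzP: "g m z \<in> PSn n" for m unfolding gz PS_iff using jpow_cvecs jpow_nonzero[OF v(1,2)] by blast
  have "1 / (1 + \<epsilon>) \<le> pcoord_frac {1..n+1} 1 y" if eps: "\<epsilon> > 0" for \<epsilon>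
  proof (rule tendsto_zero_lower_bound)
    show "(\<lambda>m. pdn n (g m z) y) \<longlonglongrightarrow> 0" using conv unfolding mconv_def .
    obtain N where N: "\<forall>k::int. N \<le> real_of_int \<bar>k\<bar> \<longrightarrow> 1 / (1 + \<epsilon>) \<le> coord_frac {1..n+1} 1 (jpow n k v)"
      using coord_frac_1_jpow_eventually_ge[OF v(1,2) eps] by blast
    show "eventually (\<lambda>m. 1 / (1 + \<epsilon>) - pdn n (g m z) y \<le> pcoord_frac {1..n+1} 1 y) sequentially"
      using inj_eventually_abs_ge[OF \<kappa>(1), of "\<lceil>N\<rceil>"]
    proof (rule eventually_mono)
      fix m assume "\<lceil>N\<rceil> \<le> \<bar>\<kappa> m\<bar>"
      then have "1 / (1 + \<epsilon>) \<le> pcoord_frac {1..n+1} 1 (g m z)"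
        using N unfolding gz pcoord_frac_pt by (meson ceiling_le_iff of_int_le_iff)
      moreover have "\<bar>pcoord_frac {1..n+1} 1 (g m z) - pcoord_frac {1..n+1} 1 y\<bar> \<le> pdn n (g m z) y"
        by (rule pcoord_frac_lipschitz[OF _ _ gzP y]) auto
      ultimately show "1 / (1 + \<epsilon>) - pdn n (g m z) y \<le> pcoord_frac {1..n+1} 1 y" by linarith
    qed
  qed
  moreover have "pcoord_frac {1..n+1} 1 y \<le> 1"
    using y coord_frac_le_1[of "{1..n+1}" 1] unfolding PS_iff by (auto simp: pcoord_frac_pt)
  ultimately show "y \<in> {p \<in> PSn n. pcoord_frac {1..n+1} 1 p = 1}"
    using y ge_1_of_inverse_bounds by auto
qed

lemma pcoord_frac_1_eq_1: "{p \<in> PSn n. pcoord_frac {1..n+1} 1 p = 1} = {pt (e 1)}"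
proof (intro equalityI subsetI)
  fix p assume "p \<in> {p \<in> PSn n. pcoord_frac {1..n+1} 1 p = 1}"
  then obtain v where v: "v \<in> cvecs {1..n+1}" "v \<noteq> (\<lambda>i. 0)" "p = pt v" "coord_frac {1..n+1} 1 v = 1"
    unfolding PS_iff by (auto simp: pcoord_frac_pt)
  then show "p \<in> {pt (e 1)}" using coord_frac_1_eq_1_imp[OF v(1,2,4)] by simp
next
  fix p assume "p \<in> {pt (e 1)}"
  then have p: "p = pt (e 1)" by simp
  have e1: "e 1 \<in> cvecs {1..n+1}" by (rule e_cvecs) simp
  have "coord_frac {1..n+1} 1 (e 1) = 1"
  proof -
    have "sqnorm {1..n+1} (e 1) = 1" using vnorm_e[of 1 n] unfolding vnorm_def by simp
    then show ?thesis unfolding coord_frac_def by (simp add: e_def)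
  qed
  then have "pcoord_frac {1..n+1} 1 p = 1" unfolding p pcoord_frac_pt .
  moreover have "p \<in> PSn n" unfolding p PS_iff using e1 e_nonzero by blast
  ultimately show "p \<in> {p \<in> PSn n. pcoord_frac {1..n+1} 1 p = 1}" by blast
qed

lemma LimLambda_jordan1:
  fixes n :: nat
  assumes n: "n \<ge> 1"
  shows "LimLambda (PSn n) (pdn n) (gamma_grp n) = {pt (e 1)}"
proof
  show "LimLambda (PSn n) (pdn n) (gamma_grp n) \<subseteq> {pt (e 1)}"
    unfolding LimLambda_def pcoord_frac_1_eq_1[of n, symmetric]
    by (rule mclos_level_set[OF _ _ orbit_limits_subset[OF n]]) auto
  show "{pt (e 1)} \<subseteq> LimLambda (PSn n) (pdn n) (gamma_grp n)" using e1_in_LimLambda[OF n] by simp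
qed

lemma mcompact_pcoord_frac_1_bounded:
  fixes n :: nat
  assumes K: "mcompact (PSn n) (pdn n) K" and e1: "pt (e 1) \<notin> K"
  shows "\<exists>\<delta>>0. \<forall>x\<in>K. pcoord_frac {1..n+1} 1 x \<le> 1 - \<delta>"
proof (rule ccontr)
  assume "\<not> ?thesis"
  then have neg: "\<forall>\<delta>>0. \<exists>x\<in>K. pcoord_frac {1..n+1} 1 x > 1 - \<delta>" by (auto simp: not_le)
  have "\<forall>m::nat. \<exists>x\<in>K. pcoord_frac {1..n+1} 1 x > 1 - 1 / (real m + 1)"
  proof
    fix m :: nat
    have "1 / (real m + 1) > 0" by simp
    then show "\<exists>x\<in>K. pcoord_frac {1..n+1} 1 x > 1 - 1 / (real m + 1)" using neg by blast
  qed
  then obtain s where s: "\<forall>m. s m \<in> K" "\<forall>m. pcoord_frac {1..n+1} 1 (s m) > 1 - 1 / (real m + 1)" by metis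
  have KP: "K \<subseteq> PSn n" using K unfolding mcompact_def by blast
  obtain r y where r: "strict_mono r" "y \<in> K" "mconv (pdn n) (s \<circ> r) y"
    using K s(1) unfolding mcompact_def by blast
  have yP: "y \<in> PSn n" using r(2) KP by blast
  have "1 \<le> pcoord_frac {1..n+1} 1 y"
  proof (rule tendsto_zero_lower_bound)
    show "(\<lambda>m. pdn n (s (r m)) y + 1 / (real m + 1)) \<longlonglongrightarrow> 0"
      using r(3) unfolding mconv_def comp_def
      by (intro tendsto_add_zero LIMSEQ_one_over_Suc)
    show "eventually (\<lambda>m. 1 - (pdn n (s (r m)) y + 1 / (real m + 1)) \<le> pcoord_frac {1..n+1} 1 y) sequentially"
    proof (intro always_eventually allI)
      fix m
      have sP: "s (r m) \<in> PSn n" using s(1) KP by blast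
      have l: "\<bar>pcoord_frac {1..n+1} 1 (s (r m)) - pcoord_frac {1..n+1} 1 y\<bar> \<le> pdn n (s (r m)) y"
        by (rule pcoord_frac_lipschitz[OF _ _ sP yP]) auto
      have "m \<le> r m" using seq_suble[OF r(1)] by simp
      then have "1 / (real (r m) + 1) \<le> 1 / (real m + 1)" by (intro divide_left_mono) auto
      then show "1 - (pdn n (s (r m)) y + 1 / (real m + 1)) \<le> pcoord_frac {1..n+1} 1 y" using l s(2) by smt
    qed
  qed
  moreover have "pcoord_frac {1..n+1} 1 y \<le> 1"
  proof -
    obtain v where yv: "y = pt v" using yP unfolding PS_iff by blast
    show ?thesis unfolding yv pcoord_frac_pt by (rule coord_frac_le_1) auto
  qed
  ultimately have "y \<in> {p \<in> PSn n. pcoord_frac {1..n+1} 1 p = 1}" using yP by simp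
  then have "y = pt (e 1)" unfolding pcoord_frac_1_eq_1 by simp
  then show False using r(2) e1 by simp
qed

text \<open>If y had a nonzero last coordinate, applying the inverse iterates \<gamma>^-\<kappa>_m to
  \<gamma>^\<kappa>_m k_m \<approx> y would bring points k_m of K arbitrarily close to [e_1].\<close>
lemma L2_limits_subset:
  fixes n :: nat
  assumes n: "n \<ge> 1"
  shows "{y \<in> PSn n. \<exists>K. mcompact (PSn n) (pdn n) K \<and> K \<subseteq> PSn n - LimLambda (PSn n) (pdn n) (gamma_grp n) \<and>
        (\<exists>g k. inj g \<and> (\<forall>m. g m \<in> gamma_grp n) \<and> (\<forall>m. k m \<in> K) \<and> mconv (pdn n) (\<lambda>m. g m (k m)) y)}
     \<subseteq> {p \<in> PSn n. pcoord_frac {1..n+1} (n+1) p = 0}"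
proof
  fix y assume "y \<in> {y \<in> PSn n. \<exists>K. mcompact (PSn n) (pdn n) K \<and> K \<subseteq> PSn n - LimLambda (PSn n) (pdn n) (gamma_grp n) \<and>
        (\<exists>g k. inj g \<and> (\<forall>m. g m \<in> gamma_grp n) \<and> (\<forall>m. k m \<in> K) \<and> mconv (pdn n) (\<lambda>m. g m (k m)) y)}"
  then obtain K g k where y: "y \<in> PSn n" and K: "mcompact (PSn n) (pdn n) K" "K \<subseteq> PSn n - LimLambda (PSn n) (pdn n) (gamma_grp n)"
    and g: "inj g" "\<forall>m. g m \<in> gamma_grp n" and k: "\<forall>m. k m \<in> K" and conv: "mconv (pdn n) (\<lambda>m. g m (k m)) y"
    by blast
  have e1K: "pt (e 1) \<notin> K" using K(2) e1_in_LimLambda[OF n] by blast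
  obtain \<delta> where \<delta>: "\<delta> > 0" "\<forall>x\<in>K. pcoord_frac {1..n+1} 1 x \<le> 1 - \<delta>" using mcompact_pcoord_frac_1_bounded[OF K(1) e1K] by blast
  obtain \<kappa> where \<kappa>: "inj \<kappa>" "\<forall>m. g m = gamma_pow n (\<kappa> m)" using cyclic_jordan1_seq[OF n g] by blast
  obtain yv where yv: "y = pt yv" using y unfolding PS_iff by blast
  have q0: "pcoord_frac {1..n+1} (n+1) y \<ge> 0" unfolding yv pcoord_frac_pt by (rule coord_frac_nonneg)
  have "pcoord_frac {1..n+1} (n+1) y = 0"
  proof (rule ccontr)
    assume "pcoord_frac {1..n+1} (n+1) y \<noteq> 0"
    then have qpos: "pcoord_frac {1..n+1} (n+1) y > 0" using q0 by simp
    define q where "q = pcoord_frac {1..n+1} (n+1) y"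
    have "q / 2 > 0" using qpos unfolding q_def by simp
    from coord_frac_1_jpow_uniform[OF order_refl this \<delta>(1), of n]
    obtain N where N: "\<forall>k::int. N \<le> real_of_int \<bar>k\<bar> \<longrightarrow> (\<forall>w. w \<in> cvecs {1..n+1} \<longrightarrow> w \<noteq> (\<lambda>i. 0) \<longrightarrow>
       (\<forall>i. n+1 < i \<longrightarrow> w i = 0) \<longrightarrow> q / 2 \<le> coord_frac {1..n+1} (n+1) w \<longrightarrow>
       1 / (1 + \<delta>) \<le> coord_frac {1..n+1} 1 (jpow n k w))"
      by blast
    have ev1: "eventually (\<lambda>m. \<lceil>N\<rceil> \<le> \<bar>\<kappa> m\<bar>) sequentially" by (rule inj_eventually_abs_ge[OF \<kappa>(1)])
    have ev2: "eventually (\<lambda>m. pdn n (g m (k m)) y < q / 2) sequentially"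
      using conv unfolding mconv_def q_def using qpos by (intro order_tendstoD(2)) auto
    obtain m where m1: "\<lceil>N\<rceil> \<le> \<bar>\<kappa> m\<bar>" and m2: "pdn n (g m (k m)) y < q / 2"
      using eventually_happens[OF eventually_conj[OF ev1 ev2]] by auto
    have "k m \<in> PSn n" using k K(2) by blast
    then obtain u where u: "u \<in> cvecs {1..n+1}" "u \<noteq> (\<lambda>i. 0)" "k m = pt u" unfolding PS_iff by blast
    define w where "w = jpow n (\<kappa> m) u"
    have gk: "g m (k m) = pt w" unfolding w_def using \<kappa>(2) gamma_pow_pt[OF u(1,2)] u(3) by simp
    have wc: "w \<in> cvecs {1..n+1}" "w \<noteq> (\<lambda>i. 0)" unfolding w_def using jpow_cvecs jpow_nonzero[OF u(1,2)] by auto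
    have gkP: "g m (k m) \<in> PSn n" unfolding gk PS_iff using wc by blast
    have "\<bar>pcoord_frac {1..n+1} (n+1) (g m (k m)) - pcoord_frac {1..n+1} (n+1) y\<bar> \<le> pdn n (g m (k m)) y"
      by (rule pcoord_frac_lipschitz[OF _ _ gkP y]) auto
    then have wq: "q / 2 \<le> coord_frac {1..n+1} (n+1) w" using m2 unfolding gk pcoord_frac_pt q_def by linarith
    have kN: "N \<le> real_of_int \<bar>- \<kappa> m\<bar>" using m1 by linarith
    have supp: "\<forall>i. n+1 < i \<longrightarrow> w i = 0" using cvecs_out[OF wc(1)] by auto
    have "jpow n (- \<kappa> m) w = u" unfolding w_def by (rule jpow_neg_cancel[OF u(1)])
    moreover have "1 / (1 + \<delta>) \<le> coord_frac {1..n+1} 1 (jpow n (- \<kappa> m) w)"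
      using N kN wc supp wq by blast
    ultimately have "1 / (1 + \<delta>) \<le> coord_frac {1..n+1} 1 u" by simp
    moreover have "coord_frac {1..n+1} 1 u \<le> 1 - \<delta>" using \<delta>(2) k unfolding u(3)[symmetric] pcoord_frac_pt[symmetric] by blast
    ultimately have "1 / (1 + \<delta>) \<le> 1 - \<delta>" by linarith
    then have "1 \<le> (1 - \<delta>) * (1 + \<delta>)" using \<delta>(1) by (simp add: field_simps)
    then have "\<delta> * \<delta> \<le> 0" by (simp add: algebra_simps)
    then show False using \<delta>(1) by (simp add: mult_le_0_iff)
  qed
  then show "y \<in> {p \<in> PSn n. pcoord_frac {1..n+1} (n+1) p = 0}" using y by simp
qed

lemma LimL2_subset_coord_hyperplane:
  fixes n :: nat
  assumes n: "n \<ge> 1"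
  shows "LimL2 (PSn n) (pdn n) (gamma_grp n) \<subseteq> coord_hyperplane n"
  unfolding LimL2_def coord_hyperplane_pcoord_frac by (rule mclos_level_set[OF _ _ L2_limits_subset[OF n]]) auto

lemma LimLambda_subset_coord_hyperplane:
  fixes n :: nat
  assumes n: "n \<ge> 1"
  shows "LimLambda (PSn n) (pdn n) (gamma_grp n) \<subseteq> coord_hyperplane n"
  unfolding LimLambda_jordan1[OF n] using e1_in_coord_hyperplane[OF n] by simp

lemma mcompact_hyperplane_e1:
  fixes n :: nat
  shows "mcompact (PSn n) (pdn n) (hyperplane {1..n+1} (e 1))"
  unfolding mcompact_def
proof (intro conjI allI impI)
  show "hyperplane {1..n+1} (e 1) \<subseteq> PSn n" unfolding hyperplane_def by blast
  fix s :: "nat \<Rightarrow> (nat \<Rightarrow> complex) set" assume s: "\<forall>m. s m \<in> hyperplane {1..n+1} (e 1)"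
  have "\<forall>m. \<exists>u. u \<in> cvecs {1..n+1} \<and> sqnorm {1..n+1} u = 1 \<and> u 1 = 0 \<and> s m = pt u"
  proof
    fix m
    obtain v where v: "v \<in> cvecs {1..n+1}" "v \<noteq> (\<lambda>i. 0)" "lform n (e 1) v = 0" "s m = pt v"
      using s unfolding hyperplane_lform by blast
    obtain u c where u: "u \<in> cvecs {1..n+1}" "sqnorm {1..n+1} u = 1" "pt u = pt v" "c \<noteq> 0" "u = (\<lambda>i. c * v i)"
      using normalize_vec[OF v(1,2)] by blast
    have "u 1 = 0" using v(3) u(5) unfolding lform_e1 by simp
    then show "\<exists>u. u \<in> cvecs {1..n+1} \<and> sqnorm {1..n+1} u = 1 \<and> u 1 = 0 \<and> s m = pt u"
      using u v(4) by (intro exI[of _ u]) simp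
  qed
  then have "\<exists>U. \<forall>m. U m \<in> cvecs {1..n+1} \<and> sqnorm {1..n+1} (U m) = 1 \<and> U m 1 = 0 \<and> s m = pt (U m)"
    by (rule choice)
  then obtain U :: "nat \<Rightarrow> nat \<Rightarrow> complex"
    where "\<forall>m. U m \<in> cvecs {1..n+1} \<and> sqnorm {1..n+1} (U m) = 1 \<and> U m 1 = 0 \<and> s m = pt (U m)"
    by (elim exE)
  then have U: "\<forall>m. U m \<in> cvecs {1..n+1}" "\<forall>m. sqnorm {1..n+1} (U m) = 1"
    "\<forall>m. U m 1 = 0" "\<forall>m. s m = pt (U m)" by auto
  obtain r u where r: "strict_mono r" and u: "u \<in> cvecs {1..n+1}" "sqnorm {1..n+1} u = 1"
    and conv: "\<forall>i. (\<lambda>m. U (r m) i) \<longlonglongrightarrow> u i"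
    using unit_vectors_convergent_subseq[OF _ U(1,2)] by blast
  have "(\<lambda>m. U (r m) 1) \<longlonglongrightarrow> u 1" using conv by blast
  then have "u 1 = 0" using U(3) LIMSEQ_unique[OF _ tendsto_const[of 0]] by simp
  moreover have "u \<noteq> (\<lambda>i. 0)" using u(2) unfolding sqnorm_def by auto
  ultimately have ul: "pt u \<in> hyperplane {1..n+1} (e 1)" unfolding hyperplane_lform using u(1) lform_e1[of n u]
    by (intro CollectI exI[of _ u]) auto
  have "(\<lambda>m. pdn n (pt (U (r m))) (pt u)) \<longlonglongrightarrow> 0"
    by (rule pdist_pt_tendsto_0) (use conv U(2) u(2) in auto)
  then have "(\<lambda>m. pdn n (s (r m)) (pt u)) \<longlonglongrightarrow> 0" using U(4) by simp
  then show "\<exists>r y. strict_mono r \<and> y \<in> hyperplane {1..n+1} (e 1) \<and> mconv (pdn n) (s \<circ> r) y"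
    unfolding mconv_def comp_def using r ul by (intro exI[of _ r] exI[of _ "pt u"]) auto
qed

lemma coord_hyperplane_subset_L2_limits:
  fixes n :: nat
  assumes n: "n \<ge> 1"
  shows "coord_hyperplane n \<subseteq> {y \<in> PSn n. \<exists>K. mcompact (PSn n) (pdn n) K \<and> K \<subseteq> PSn n - LimLambda (PSn n) (pdn n) (gamma_grp n) \<and>
        (\<exists>g k. inj g \<and> (\<forall>m. g m \<in> gamma_grp n) \<and> (\<forall>m. k m \<in> K) \<and> mconv (pdn n) (\<lambda>m. g m (k m)) y)}"
proof
  fix y assume yH: "y \<in> coord_hyperplane n"
  then obtain u where u: "u \<in> cvecs {1..n+1}" "u (n+1) = 0" "sqnorm {1..n+1} u = 1" "y = pt u"
    by (rule coord_hyperplane_unit_rep)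
  define K where "K = hyperplane {1..n+1} (e 1)"
  have Kc: "mcompact (PSn n) (pdn n) K" unfolding K_def by (rule mcompact_hyperplane_e1)
  have KP: "K \<subseteq> PSn n - LimLambda (PSn n) (pdn n) (gamma_grp n)"
    unfolding LimLambda_jordan1[OF n] K_def using e1_notin_hyperplane_e1[of n] unfolding hyperplane_def by blast
  have a1: "e 1 1 \<noteq> 0" unfolding e_def by simp
  let ?w = "\<lambda>m. lift_vec n (e 1) m u"
  have near: "\<exists>N. \<forall>m\<ge>N. ?w m \<in> cvecs {1..n+1} \<and> ?w m \<noteq> (\<lambda>i. 0) \<and> lform n (e 1) (?w m) = 0 \<and>
      pdn n (pt (jpow n (int m) (?w m))) y \<le> r" if "r > 0" for r
    using lift_vec_near[where a="e 1", OF n a1 that] u by (metis (no_types, lifting))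
  obtain N0 where N0: "\<forall>m\<ge>N0. ?w m \<in> cvecs {1..n+1} \<and> ?w m \<noteq> (\<lambda>i. 0) \<and> lform n (e 1) (?w m) = 0"
    using near[of 1] by auto
  define g where "g j = gamma_pow n (int (N0 + j))" for j
  define k where "k j = pt (?w (N0 + j))" for j
  have ginj: "inj g"
    using inj_gamma_pow[OF n] unfolding g_def inj_def by (metis add_left_cancel of_nat_eq_iff)
  have gmem: "\<forall>j. g j \<in> gamma_grp n" unfolding g_def cyclic_jordan1_eq by auto
  have kmem: "\<forall>j. k j \<in> K" unfolding k_def K_def hyperplane_lform using N0 by fastforce
  have gk: "g j (k j) = pt (jpow n (int (N0 + j)) (?w (N0 + j)))" for j
    unfolding g_def k_def using N0 gamma_pow_pt by simp
  have conv: "mconv (pdn n) (\<lambda>j. g j (k j)) y"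
    unfolding mconv_def
  proof (rule LIMSEQ_I)
    fix r :: real assume r: "r > 0"
    then obtain N1 where N1: "\<forall>m\<ge>N1. pdn n (pt (jpow n (int m) (?w m))) y \<le> r / 2"
      using near[of "r/2"] by auto
    show "\<exists>no. \<forall>j\<ge>no. norm (pdn n (g j (k j)) y - 0) < r"
    proof (intro exI[of _ N1] allI impI)
      fix j assume "N1 \<le> j"
      then have "N1 \<le> N0 + j" by simp
      then have "pdn n (g j (k j)) y \<le> r / 2" using N1 unfolding gk by blast
      moreover have "pdn n (g j (k j)) y \<ge> 0" unfolding gk u(4) pdist_pt by (rule line_dist_nonneg)
      ultimately show "norm (pdn n (g j (k j)) y - 0) < r" using r by simp
    qed
  qed
  have yP: "y \<in> PSn n" using yH coord_hyperplane_subset by blast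
  show "y \<in> {y \<in> PSn n. \<exists>K. mcompact (PSn n) (pdn n) K \<and> K \<subseteq> PSn n - LimLambda (PSn n) (pdn n) (gamma_grp n) \<and>
        (\<exists>g k. inj g \<and> (\<forall>m. g m \<in> gamma_grp n) \<and> (\<forall>m. k m \<in> K) \<and> mconv (pdn n) (\<lambda>m. g m (k m)) y)}"
    using yP Kc KP ginj gmem kmem conv
    by (intro CollectI conjI exI[of _ K] exI[of _ g] exI[of _ k]) auto
qed

lemma KulLim_jordan1:
  fixes n :: nat
  assumes n: "n \<ge> 1"
  shows "KulLim (PSn n) (pdn n) (gamma_grp n) = coord_hyperplane n"
proof
  show "KulLim (PSn n) (pdn n) (gamma_grp n) \<subseteq> coord_hyperplane n"
    unfolding KulLim_def using LimLambda_subset_coord_hyperplane[OF n] LimL2_subset_coord_hyperplane[OF n] by blast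
  have sub: "{y \<in> PSn n. \<exists>K. mcompact (PSn n) (pdn n) K \<and> K \<subseteq> PSn n - LimLambda (PSn n) (pdn n) (gamma_grp n) \<and>
        (\<exists>g k. inj g \<and> (\<forall>m. g m \<in> gamma_grp n) \<and> (\<forall>m. k m \<in> K) \<and> mconv (pdn n) (\<lambda>m. g m (k m)) y)} \<subseteq> PSn n"
    by (rule subsetI, erule CollectE, erule conjunct1)
  have "coord_hyperplane n \<subseteq> LimL2 (PSn n) (pdn n) (gamma_grp n)"
    unfolding LimL2_def using coord_hyperplane_subset_L2_limits[OF n] mclos_superset[OF sub] by (rule subset_trans)
  then show "coord_hyperplane n \<subseteq> KulLim (PSn n) (pdn n) (gamma_grp n)" unfolding KulLim_def by blast
qed

section \<open>The fixed point of the exterior power\<close>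

text \<open>omit n i = {1..n+1} - {i} indexes the basis vector e_1 \<and> \<dots> \<and> e_{i-1} \<and> e_{i+1} \<and> \<dots> \<and> e_{n+1}
  of the n-th exterior power; omit_nth i a is the (a+1)-st element of it.\<close>
definition omit :: "nat \<Rightarrow> nat \<Rightarrow> nat set" where
  "omit n i = {1..n+1} - {i}"

definition omit_nth :: "nat \<Rightarrow> nat \<Rightarrow> nat" where
  "omit_nth i a = (if a + 1 < i then a + 1 else a + 2)"

lemma sorted_list_of_omit:
  assumes i: "i \<in> {1..n+1}"
  shows "sorted_list_of_set (omit n i) = [1..<i] @ [Suc i..<n+2]"
proof -
  have fin: "finite (omit n i)" unfolding omit_def by simp
  have set: "set ([1..<i] @ [Suc i..<n+2]) = omit n i" unfolding omit_def using i by auto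
  have card: "card (omit n i) = n" unfolding omit_def using i by simp
  have "length ([1..<i] @ [Suc i..<n+2]) = (i - 1) + (n + 2 - Suc i)" by (simp only: length_append length_upt)
  then have len: "length ([1..<i] @ [Suc i..<n+2]) = n" using i by simp
  have sw: "sorted_wrt (<) ([1..<i] @ [Suc i..<n+2])"
    by (auto simp: sorted_wrt_append)
  have "sorted_wrt (<) ([1..<i] @ [Suc i..<n+2]) \<and> set ([1..<i] @ [Suc i..<n+2]) = omit n i \<and>
      length ([1..<i] @ [Suc i..<n+2]) = card (omit n i)"
    using set sw by (simp only: card len)
  then show ?thesis using sorted_list_of_set_unique[OF fin, of "[1..<i] @ [Suc i..<n+2]"] by blast
qed

lemma sorted_list_of_omit_nth:
  assumes i: "i \<in> {1..n+1}" and a: "a < n"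
  shows "sorted_list_of_set (omit n i) ! a = omit_nth i a"
proof -
  have "([1..<i] @ [Suc i..<n+2]) ! a = omit_nth i a"
  proof (cases "a < i - 1")
    case True
    then show ?thesis unfolding omit_nth_def by (simp add: nth_append)
  next
    case False
    have "([1..<i] @ [Suc i..<n+2]) ! a = [Suc i..<n+2] ! (a - (i - 1))" using False by (simp add: nth_append)
    also have "\<dots> = Suc i + (a - (i - 1))"
    proof (rule nth_upt)
      show "Suc i + (a - (i - 1)) < n + 2" using i a False by simp
    qed
    also have "\<dots> = a + 2" using i False by simp
    finally show ?thesis unfolding omit_nth_def using False by simp
  qed
  then show ?thesis using sorted_list_of_omit[OF i] by simp
qed

lemma inj_on_omit: "inj_on (omit n) {1..n+1}"
  unfolding inj_on_def omit_def by auto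

lemma omit_eq_iff: "i \<in> {1..n+1} \<Longrightarrow> j \<in> {1..n+1} \<Longrightarrow> omit n i = omit n j \<longleftrightarrow> i = j"
  using inj_on_omit unfolding inj_on_def by auto

lemma nsubsets_eq_omit: "nsubsets n = omit n ` {1..n+1}"
proof (intro equalityI subsetI)
  fix S assume "S \<in> nsubsets n"
  then have S: "S \<subseteq> {1..n+1}" "card S = n" unfolding nsubsets_def by auto
  have "{1..n+1} - S \<noteq> {}"
  proof
    assume "{1..n+1} - S = {}"
    then have "S = {1..n+1}" using S(1) by auto
    then show False using S(2) by simp
  qed
  then obtain i where i: "i \<in> {1..n+1}" "i \<notin> S" by blast
  have sub: "S \<subseteq> omit n i" unfolding omit_def using S(1) i(2) by auto
  have "card (omit n i) = n" unfolding omit_def using i(1) by simp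
  then have "S = omit n i" using card_subset_eq[OF _ sub] S(2) unfolding omit_def by simp
  then show "S \<in> omit n ` {1..n+1}" using i(1) by blast
next
  fix S assume "S \<in> omit n ` {1..n+1}"
  then obtain i where i: "i \<in> {1..n+1}" "S = omit n i" by blast
  then show "S \<in> nsubsets n" unfolding nsubsets_def omit_def by auto
qed

lemma inj_endo_ge_fixes:
  fixes p :: "nat \<Rightarrow> nat"
  assumes A: "finite A" and img: "p ` A \<subseteq> A" and inj: "inj_on p A" and ge: "\<forall>a\<in>A. a \<le> p a"
  shows "\<forall>a\<in>A. p a = a"
proof (rule ccontr)
  assume "\<not> ?thesis"
  then obtain a0 where a0: "a0 \<in> A" "a0 < p a0" using ge by force
  have eq: "p ` A = A" by (rule endo_inj_surj[OF A img inj])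
  have "sum p A = sum (\<lambda>x. x) (p ` A)" using sum.reindex[OF inj, of "\<lambda>x. x"] by simp
  also have "\<dots> = sum (\<lambda>x. x) A" unfolding eq ..
  finally have s: "sum p A = sum (\<lambda>x. x) A" .
  have "sum (\<lambda>x. x) A < sum p A" by (rule sum_strict_mono_ex1[OF A]) (use ge a0 in auto)
  then show False using s by simp
qed

lemma inj_endo_le_fixes:
  fixes p :: "nat \<Rightarrow> nat"
  assumes A: "finite A" and img: "p ` A \<subseteq> A" and inj: "inj_on p A" and le: "\<forall>a\<in>A. p a \<le> a"
  shows "\<forall>a\<in>A. p a = a"
proof (rule ccontr)
  assume "\<not> ?thesis"
  then obtain a0 where a0: "a0 \<in> A" "p a0 < a0" using le by force
  have eq: "p ` A = A" by (rule endo_inj_surj[OF A img inj])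
  have "sum p A = sum (\<lambda>x. x) (p ` A)" using sum.reindex[OF inj, of "\<lambda>x. x"] by simp
  also have "\<dots> = sum (\<lambda>x. x) A" unfolding eq ..
  finally have s: "sum p A = sum (\<lambda>x. x) A" .
  have "sum p A < sum (\<lambda>x. x) A" by (rule sum_strict_mono_ex1[OF A]) (use le a0 in auto)
  then show False using s by simp
qed

lemma jordan1_val: "x \<in> {1..n+1} \<Longrightarrow> y \<in> {1..n+1} \<Longrightarrow> jordan1 n x y = (if y = x \<or> y = Suc x then 1 else 0)"
  unfolding jordan1_def by simp

lemma omit_nth_range: "i \<in> {1..n+1} \<Longrightarrow> a < n \<Longrightarrow> omit_nth i a \<in> {1..n+1}"
  unfolding omit_nth_def by auto

lemma ldet_cong:
  assumes "\<forall>a<k. \<forall>b<k. M a b = M' a b"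
  shows "ldet k M = ldet k M'"
  unfolding ldet_def
proof (rule sum.cong[OF refl])
  fix p assume "p \<in> {p. p permutes {..<k}}"
  then have p: "p permutes {..<k}" by simp
  have "(\<Prod>i<k. M i (p i)) = (\<Prod>i<k. M' i (p i))"
    using assms permutes_in_image[OF p] by (intro prod.cong) auto
  then show "of_int (sign p) * (\<Prod>i<k. M i (p i)) = of_int (sign p) * (\<Prod>i<k. M' i (p i))" by simp
qed

lemma ldet_eq_0:
  assumes "\<And>p. p permutes {..<k} \<Longrightarrow> \<exists>a<k. M a (p a) = 0"
  shows "ldet k M = 0"
  unfolding ldet_def
proof (rule sum.neutral, intro ballI)
  fix p assume "p \<in> {p. p permutes {..<k}}"
  then obtain a where "a < k" "M a (p a) = 0" using assms by blast
  then have "(\<Prod>a<k. M a (p a)) = 0" by (intro prod_zero) auto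
  then show "of_int (sign p) * (\<Prod>a<k. M a (p a)) = 0" by simp
qed

lemma ldet_eq_diag:
  assumes "\<And>p. p permutes {..<k} \<Longrightarrow> p \<noteq> id \<Longrightarrow> \<exists>a<k. M a (p a) = 0"
  shows "ldet k M = (\<Prod>a<k. M a a)"
proof -
  have "ldet k M = (\<Sum>p\<in>{p. p permutes {..<k}}. if p = id then (\<Prod>a<k. M a a) else 0)"
    unfolding ldet_def
  proof (rule sum.cong[OF refl])
    fix p assume p: "p \<in> {p. p permutes {..<k}}"
    show "of_int (sign p) * (\<Prod>a<k. M a (p a)) = (if p = id then (\<Prod>a<k. M a a) else 0)"
    proof (cases "p = id")
      case False
      then obtain a where "a < k" "M a (p a) = 0" using assms p by blast
      then have "(\<Prod>a<k. M a (p a)) = 0" by (intro prod_zero) auto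
      then show ?thesis using False by simp
    qed simp
  qed
  also have "\<dots> = (\<Prod>a<k. M a a)"
    using sum.delta[OF finite_permutations[OF finite_lessThan[of k]], of id] permutes_id by simp
  finally show ?thesis .
qed

definition omit_minor :: "nat \<Rightarrow> nat \<Rightarrow> nat \<Rightarrow> nat \<Rightarrow> complex" where
  "omit_minor i j a b = (if omit_nth j b = omit_nth i a \<or> omit_nth j b = Suc (omit_nth i a) then 1 else 0)"

lemma compound_jordan1_omit:
  assumes i: "i \<in> {1..n+1}" and j: "j \<in> {1..n+1}"
  shows "compound n (jordan1 n) (omit n i) (omit n j) = ldet n (omit_minor i j)"
  unfolding compound_def
proof (rule ldet_cong, intro allI impI)
  fix a b assume a: "a < n" and b: "b < n"
  have sa: "omit_nth i a \<in> {1..n+1}" by (rule omit_nth_range[OF i a])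
  have sb: "omit_nth j b \<in> {1..n+1}" by (rule omit_nth_range[OF j b])
  show "jordan1 n (sorted_list_of_set (omit n i) ! a) (sorted_list_of_set (omit n j) ! b) = omit_minor i j a b"
    unfolding sorted_list_of_omit_nth[OF i a] sorted_list_of_omit_nth[OF j b] jordan1_val[OF sa sb] omit_minor_def ..
qed

text \<open>For i < j the rows i-1..n-1 of the minor have their nonzero entries only in the
  fewer columns i..n-1, so no permutation avoids a zero entry.\<close>
lemma omit_minor_upper_has_zero:
  assumes i: "i \<in> {1..n+1}" and j: "j \<in> {1..n+1}" and ij: "i < j" and p: "p permutes {..<n}"
  shows "\<exists>a<n. omit_minor i j a (p a) = 0"
proof (rule ccontr)
  assume "\<not> ?thesis"
  then have nz: "\<forall>a<n. omit_minor i j a (p a) \<noteq> 0" by simp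
  define R where "R = {i-1..<n}"
  define C where "C = {i..<n}"
  have "p ` R \<subseteq> C"
  proof
    fix b assume "b \<in> p ` R"
    then obtain a where a: "a \<in> R" "b = p a" by auto
    have an: "a < n" using a(1) unfolding R_def by simp
    have "p a < n" using permutes_in_image[OF p] an by simp
    moreover have "omit_minor i j a (p a) \<noteq> 0" using nz an by simp
    then have "i \<le> p a" using a(1) ij i unfolding R_def omit_minor_def omit_nth_def by (auto split: if_splits)
    ultimately show "b \<in> C" unfolding C_def a(2) by simp
  qed
  moreover have "inj_on p R" using permutes_inj[OF p] by (simp add: inj_on_def inj_def)
  ultimately have "card R \<le> card C" using card_inj_on_le[of p R C] unfolding C_def by auto
  moreover have "card R = n - (i - 1)" "card C = n - i" unfolding R_def C_def by auto
  moreover have "i \<le> n" using ij j by simp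
  ultimately show False using i by simp
qed

text \<open>For j \<le> i the nonzero entries force p to preserve each of the index blocks
  a+1 < j, j \<le> a+1 < i and i \<le> a+1, moving every index in one fixed direction on each block;
  an injective self-map of a finite set of naturals that never decreases (or never
  increases) is the identity.\<close>
lemma omit_minor_lower_has_zero:
  assumes ij: "j \<le> i" and p: "p permutes {..<n}" and pid: "p \<noteq> id"
  shows "\<exists>a<n. omit_minor i j a (p a) = 0"
proof (rule ccontr)
  assume "\<not> ?thesis"
  then have rel: "omit_nth j (p a) = omit_nth i a \<or> omit_nth j (p a) = Suc (omit_nth i a)" if "a < n" for a
    using that unfolding omit_minor_def by (auto split: if_splits)
  define block where "block a = {b. b < n \<and> (b + 1 < j \<longleftrightarrow> a + 1 < j) \<and> (b + 1 < i \<longleftrightarrow> a + 1 < i)}" for a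
  define down where "down a \<longleftrightarrow> j \<le> a + 1 \<and> a + 1 < i" for a
  have step: "p a \<in> block a \<and> (if down a then p a \<le> a else a \<le> p a)" if a: "a < n" for a
  proof -
    have "p a < n" using permutes_in_image[OF p] a by simp
    then show ?thesis using rel[OF a] a ij unfolding block_def down_def omit_nth_def
      by (cases "a + 1 < j"; cases "a + 1 < i"; cases "p a + 1 < j") auto
  qed
  have same: "block b = block a" "down b = down a" if "b \<in> block a" for a b
    using that unfolding block_def down_def by auto
  have "p a = a" if a: "a < n" for a
  proof -
    have fin: "finite (block a)" and inj: "inj_on p (block a)"
      using permutes_inj[OF p] by (auto simp: block_def inj_on_def inj_def)
    have img: "p ` block a \<subseteq> block a"
    proof
      fix c assume "c \<in> p ` block a"
      then obtain b where b: "b \<in> block a" "c = p b" by auto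
      then have "b < n" by (simp add: block_def)
      then show "c \<in> block a" using step[of b] same[OF b(1)] b(2) by simp
    qed
    have dir: "if down a then p b \<le> b else b \<le> p b" if b: "b \<in> block a" for b
    proof -
      have "b < n" using b by (simp add: block_def)
      then show ?thesis using step[of b] same(2)[OF b] by simp
    qed
    have "\<forall>b\<in>block a. p b = b"
    proof (cases "down a")
      case True
      then show ?thesis using dir by (intro inj_endo_le_fixes[OF fin img inj]) simp
    next
      case False
      then show ?thesis using dir by (intro inj_endo_ge_fixes[OF fin img inj]) simp
    qed
    moreover have "a \<in> block a" using a by (simp add: block_def)
    ultimately show ?thesis by blast
  qed
  then have "p = id"
    using permutes_not_in[OF p] by (metis id_apply lessThan_iff ext)
  then show False using pid by simp
qed

lemma compound_jordan1_omit_val: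
  assumes i: "i \<in> {1..n+1}" and j: "j \<in> {1..n+1}"
  shows "compound n (jordan1 n) (omit n i) (omit n j) = (if j \<le> i then 1 else 0)"
proof (cases "j \<le> i")
  case True
  have "ldet n (omit_minor i j) = (\<Prod>a<n. omit_minor i j a a)"
    by (rule ldet_eq_diag) (rule omit_minor_lower_has_zero[OF True])
  also have "\<dots> = 1" using True by (intro prod.neutral) (auto simp: omit_minor_def omit_nth_def)
  finally show ?thesis unfolding compound_jordan1_omit[OF i j] using True by simp
next
  case False
  have "ldet n (omit_minor i j) = 0"
    by (rule ldet_eq_0) (rule omit_minor_upper_has_zero[OF i j]; use False in simp)
  then show ?thesis unfolding compound_jordan1_omit[OF i j] using False by simp
qed

lemma mulv_compound_jordan1:
  assumes i: "i \<in> {1..n+1}"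
  shows "mulv (nsubsets n) (compound n (jordan1 n)) w (omit n i) = (\<Sum>j\<in>{1..i}. w (omit n j))"
proof -
  have mem: "omit n i \<in> nsubsets n" unfolding nsubsets_eq_omit using i by blast
  have "mulv (nsubsets n) (compound n (jordan1 n)) w (omit n i)
      = (\<Sum>S\<in>omit n ` {1..n+1}. compound n (jordan1 n) (omit n i) S * w S)"
    unfolding mulv_def using mem nsubsets_eq_omit by simp
  also have "\<dots> = (\<Sum>j\<in>{1..n+1}. compound n (jordan1 n) (omit n i) (omit n j) * w (omit n j))"
    by (rule sum.reindex[OF inj_on_omit, unfolded comp_def])
  also have "\<dots> = (\<Sum>j\<in>{1..n+1}. if j \<in> {1..i} then w (omit n j) else 0)"
    by (rule sum.cong) (use i compound_jordan1_omit_val in auto)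
  also have "\<dots> = (\<Sum>j\<in>{1..n+1} \<inter> {1..i}. w (omit n j))"
    by (rule sum.inter_restrict[symmetric]) simp
  also have "{1..n+1} \<inter> {1..i} = {1..i}" using i by auto
  finally show ?thesis .
qed

definition wedge_first :: "nat \<Rightarrow> nat set \<Rightarrow> complex" where
  "wedge_first n S = (if S = omit n (n+1) then 1 else 0)"

lemma wedge_first_cvecs: "wedge_first n \<in> cvecs (nsubsets n)"
  unfolding cvecs_def wedge_first_def nsubsets_eq_omit by auto

lemma wedge_first_nonzero: "wedge_first n \<noteq> (\<lambda>i. 0)"
  unfolding wedge_first_def by (auto dest: fun_cong[of _ _ "omit n (n+1)"])

lemma mulv_compound_wedge_first: "mulv (nsubsets n) (compound n (jordan1 n)) (wedge_first n) = wedge_first n"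
proof
  fix S
  show "mulv (nsubsets n) (compound n (jordan1 n)) (wedge_first n) S = wedge_first n S"
  proof (cases "S \<in> nsubsets n")
    case False
    then show ?thesis using wedge_first_cvecs unfolding mulv_def cvecs_def by auto
  next
    case True
    then obtain i where i: "i \<in> {1..n+1}" "S = omit n i" unfolding nsubsets_eq_omit by blast
    have "(\<Sum>j\<in>{1..i}. wedge_first n (omit n j)) = (\<Sum>j\<in>{1..i}. if j = n+1 then 1 else 0)"
      by (rule sum.cong) (use i omit_eq_iff in \<open>auto simp: wedge_first_def\<close>)
    also have "\<dots> = (if i = n+1 then 1 else 0)" using i by (simp add: sum.delta)
    also have "\<dots> = wedge_first n (omit n i)" unfolding wedge_first_def using omit_eq_iff[OF i(1), of "n+1"] by simp
    finally show ?thesis unfolding i(2) mulv_compound_jordan1[OF i(1)] .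
  qed
qed

lemma pmap_compound_pt:
  "pmap (nsubsets n) (compound n (jordan1 n)) (pt v) = pt (mulv (nsubsets n) (compound n (jordan1 n)) v)"
proof -
  obtain c where c: "c \<noteq> 0" "(SOME x. x \<in> pt v) = (\<lambda>i. c * v i)" using some_in_pt by blast
  show ?thesis unfolding pmap_def c(2) mulv_scale pt_scale[OF c(1)] ..
qed

text \<open>Eigenvectors of the all-ones lower triangular matrix: at the first nonzero entry
  x_i0 the i0-th row gives eigenvalue 1, and then row i0+1 gives x_i0 = 0 unless i0 = N.\<close>
lemma partial_sums_eigenvector:
  fixes x :: "nat \<Rightarrow> 'a::field"
  assumes row: "\<And>i. i \<in> {1..N} \<Longrightarrow> (\<Sum>j\<in>{1..i}. x j) = lm * x i"
    and ex: "\<exists>j\<in>{1..N}. x j \<noteq> 0"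
  shows "\<forall>j\<in>{1..<N}. x j = 0"
proof -
  define i0 where "i0 = (LEAST j. j \<in> {1..N} \<and> x j \<noteq> 0)"
  have "\<exists>j. j \<in> {1..N} \<and> x j \<noteq> 0" using ex by blast
  then have i0: "i0 \<in> {1..N}" "x i0 \<noteq> 0" unfolding i0_def by (metis (mono_tags, lifting) LeastI_ex)+
  have below: "x j = 0" if "j \<in> {1..N}" "j < i0" for j
    using not_less_Least[of j "\<lambda>j. j \<in> {1..N} \<and> x j \<noteq> 0"] that unfolding i0_def by auto
  have s0: "(\<Sum>j\<in>{1..i0}. x j) = x i0"
  proof -
    have "(\<Sum>j\<in>{1..i0}. x j) = x i0 + (\<Sum>j\<in>{1..i0} - {i0}. x j)" using i0(1) by (subst sum.remove[of _ i0]) auto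
    also have "(\<Sum>j\<in>{1..i0} - {i0}. x j) = 0" using below i0(1) by (intro sum.neutral) auto
    finally show ?thesis by simp
  qed
  have l1: "lm = 1" using row[OF i0(1)] s0 i0(2) by simp
  have i0N: "i0 = N"
  proof (rule ccontr)
    assume "i0 \<noteq> N"
    then have i1: "Suc i0 \<in> {1..N}" using i0(1) by auto
    have "(\<Sum>j\<in>{1..Suc i0}. x j) = (\<Sum>j\<in>{1..i0}. x j) + x (Suc i0)" by (simp add: sum.cl_ivl_Suc)
    then have "x i0 + x (Suc i0) = x (Suc i0)" using row[OF i1] s0 l1 by simp
    then show False using i0(2) by simp
  qed
  show ?thesis using below i0N by auto
qed

lemma compound_jordan1_unique_fixed_point:
  fixes n :: nat
  shows "\<exists>!p. p \<in> PS (nsubsets n) \<and> pmap (nsubsets n) (compound n (jordan1 n)) p = p"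
proof (rule ex1I[of _ "pt (wedge_first n)"])
  show "pt (wedge_first n) \<in> PS (nsubsets n) \<and> pmap (nsubsets n) (compound n (jordan1 n)) (pt (wedge_first n)) = pt (wedge_first n)"
    unfolding PS_iff pmap_compound_pt mulv_compound_wedge_first using wedge_first_cvecs wedge_first_nonzero by blast
next
  fix p assume p: "p \<in> PS (nsubsets n) \<and> pmap (nsubsets n) (compound n (jordan1 n)) p = p"
  then obtain v where v: "v \<in> cvecs (nsubsets n)" "v \<noteq> (\<lambda>i. 0)" "p = pt v" unfolding PS_iff by blast
  have "pt (mulv (nsubsets n) (compound n (jordan1 n)) v) = pt v" using p unfolding v(3) pmap_compound_pt by simp
  then obtain lm where lam: "mulv (nsubsets n) (compound n (jordan1 n)) v = (\<lambda>i. lm * v i)"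
    using pt_eqD by blast
  have "\<exists>S\<in>nsubsets n. v S \<noteq> 0"
  proof (rule ccontr)
    assume "\<not> ?thesis"
    then have "v = (\<lambda>i. 0)" using v(1) unfolding cvecs_def by (intro ext) blast
    then show False using v(2) by simp
  qed
  then have ex: "\<exists>j\<in>{1..n+1}. v (omit n j) \<noteq> 0" unfolding nsubsets_eq_omit by auto
  have row: "(\<Sum>j\<in>{1..i}. v (omit n j)) = lm * v (omit n i)" if "i \<in> {1..n+1}" for i
    using fun_cong[OF lam, of "omit n i"] mulv_compound_jordan1[OF that, of v] by simp
  have zero: "\<forall>j\<in>{1..<n+1}. v (omit n j) = 0"
    by (rule partial_sums_eigenvector[OF row ex])
  have "v = (\<lambda>S. v (omit n (n+1)) * wedge_first n S)"
  proof
    fix S show "v S = v (omit n (n+1)) * wedge_first n S"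
    proof (cases "S \<in> nsubsets n")
      case False then show ?thesis using v(1) wedge_first_cvecs unfolding cvecs_def by auto
    next
      case True
      then obtain j where j: "j \<in> {1..n+1}" "S = omit n j" unfolding nsubsets_eq_omit by blast
      show ?thesis
      proof (cases "j = n+1")
        case True then show ?thesis using j unfolding wedge_first_def by simp
      next
        case False
        then have "v (omit n j) = 0" using zero j(1) by simp
        moreover have "wedge_first n S = 0" unfolding wedge_first_def j(2) using omit_eq_iff[OF j(1), of "n+1"] False by simp
        ultimately show ?thesis unfolding j(2) by simp
      qed
    qed
  qed
  moreover have "v (omit n (n+1)) \<noteq> 0"
  proof
    assume "v (omit n (n+1)) = 0"
    then have "v = (\<lambda>S. 0)" using calculation by simp
    then show False using v(2) by simp
  qed
  ultimately show "p = pt (wedge_first n)" unfolding v(3) using pt_scale by metis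
qed

lemma coeff_1_nonzero_if_e1_notin_hyperplane:
  assumes "pt (e 1) \<notin> hyperplane {1..n+1} a"
  shows "a 1 \<noteq> 0"
proof
  assume "a 1 = 0"
  then have "lform n a (e 1) = 0" using lform_e[of 1 n a] by simp
  then have "pt (e 1) \<in> hyperplane {1..n+1} a" unfolding hyperplane_lform
    using e_cvecs[of 1 "{1..n+1}"] e_nonzero[of 1] by auto
  then show False using assms by simp
qed

theorem mainTheorem11:
  fixes n :: nat and a :: "nat \<Rightarrow> complex"
  assumes "n \<ge> 1"
    and "a \<in> cvecs {1..n+1}" and "a \<noteq> (\<lambda>i. 0)"
    and "pt (e 1) \<notin> hyperplane {1..n+1} a"
  shows "(\<exists>!p. p \<in> PS (nsubsets n) \<and> pmap (nsubsets n) (compound n (jordan1 n)) p = p)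
     \<and> (\<lambda>m. hdist {1..n+1} ((pmap {1..n+1} (jordan1 n) ^^ m) ` hyperplane {1..n+1} a)
                   (pspan {1..n+1} {pt (e k) | k. k \<in> {1..n}})) \<longlonglongrightarrow> 0
     \<and> KulLim (PS {1..n+1}) (pdist {1..n+1}) (cyclic (PS {1..n+1}) (pmap {1..n+1} (jordan1 n)))
         = pspan {1..n+1} {pt (e k) | k. k \<in> {1..n}}"
proof -
  have a1: "a 1 \<noteq> 0" using assms(4) by (rule coeff_1_nonzero_if_e1_notin_hyperplane)
  show ?thesis unfolding pspan_e_eq_coord_hyperplane
    using compound_jordan1_unique_fixed_point[of n] hdist_iterates_tendsto[where a=a, OF assms(1) a1]
      KulLim_jordan1[OF assms(1)] by simp
qed

end
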